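(* Let $p$ be a prime, let $A$ be a set with $|A|=p^2$, and let $f:A\to A$ be a bijection. Then there exists a binary operation $*$ on $A$ such that $(A,* )$ is an abelian group and $f$ is an automorphism of $(A,* )$ if and only if $f$ is the identity map or the multiset of cycle lengths of $f$ is one of the following: (a) $\frac{p^2-1}{d}$ cycles of length $d$ together with one cycle of length $1$, for some positive divisor $d$ of $p^2-1$; (b) $\frac{p-1}{d}$ cycles of length $pd$, $\frac{p-1}{d}$ cycles of length $d$, and one cycle of length $1$, for some positive divisor $d$ of $p-1$; (c) $\frac{(p-1)^2}{\mathrm{lcm}(d_1,d_2)}$ cycles of length $\mathrm{lcm}(d_1,d_2)$, $\frac{p-1}{d_1}$ cycles of length $d_1$, $\frac{p-1}{d_2}$ cycles of length $d_2$, and one cycle of length $1$, for some positive divisors $d_1,d_2$ of $p-1$ (cycles listed with equal lengths being counted together). (Equivalently: the cycle structures realised by automorphisms of any abelian group of order $p^2$ are exactly those realised by automorphisms of $\mathbb{Z}_p\times\mathbb{Z}_p$.)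
   Context: For a bijection $f$ of a finite set, a cycle is a sequence $a_1,\dots,a_m$ of distinct elements with $f(a_j)=a_{j+1}$ for $j<m$ and $f(a_m)=a_1$; its length is $m$; every element lies in exactly one cycle, and fixed points are cycles of length $1$. *)

theory Defs
  imports "HOL-Algebra.Algebra" "HOL-Library.Multiset"
begin

text \<open>The cycle of f through x: the set of all iterates of x under f.
  For a bijection of a finite set this is exactly the (underlying set of the) cycle containing x.\<close>
definition cyc_orbit :: "('a \<Rightarrow> 'a) \<Rightarrow> 'a \<Rightarrow> 'a set" where
  "cyc_orbit f x = {(f ^^ n) x | n. True}"

definition cycle_type :: "('a \<Rightarrow> 'a) \<Rightarrow> 'a set \<Rightarrow> nat multiset" where
  "cycle_type f A = image_mset card (mset_set (cyc_orbit f ` A))"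

end

theory Submission
  imports Defs "HOL-Number_Theory.Number_Theory"
begin

text \<open>
  Let \<open>f\<close> be an automorphism of an abelian group \<open>G\<close> of order \<open>p\<^sup>2\<close>. Call an \<open>f\<close>-invariant
  subgroup of order \<open>p\<close> an invariant line, and let \<open>Fix n\<close> be the subgroup fixed by \<open>f\<^sup>n\<close>, so
  that \<open>x \<in> Fix n\<close> iff the cycle length of \<open>x\<close> divides \<open>n\<close>. If no \<open>Fix (cycle_len f x)\<close> with
  \<open>x \<noteq> 1\<close> is a line, all of them are \<open>G\<close> and all nonidentity elements have the same cycle
  length: type (a). If there are two invariant lines, \<open>G\<close> is their direct product and \<open>a b\<close> has
  the lcm of the cycle lengths of \<open>a\<close> and \<open>b\<close>: type (c). If \<open>Fix d\<close> is the only invariant line,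
  then for \<open>y\<close> off it \<open>h = f\<^sup>d(y) y\<^sup>-\<^sup>1\<close> lies on it and \<open>f\<^sup>d\<^sup>n(y) = h\<^sup>n y\<close> with \<open>h\<close> of
  order \<open>p\<close>, so \<open>y\<close> has cycle length \<open>p d\<close>: type (b).

  Conversely, multiplication by an element of order \<open>d\<close> in the field with \<open>p\<^sup>2\<close> elements, and the
  matrices \<open>[[a, 1], [0, a]]\<close> and \<open>[[a\<^sub>1, 0], [0, a\<^sub>2]]\<close> acting on \<open>\<int>\<^sub>p \<times> \<int>\<^sub>p\<close>, realise these types.
  A bijection with the same cycle type as an automorphism \<open>\<sigma>\<close> of \<open>H\<close> is conjugate to \<open>\<sigma>\<close>, so the
  group structure of \<open>H\<close> can be transported along the conjugacy.
\<close>

section \<open>Cycle lengths and cycle types\<close>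

abbreviation cycle_len :: "('a \<Rightarrow> 'a) \<Rightarrow> 'a \<Rightarrow> nat" where
  "cycle_len f x \<equiv> card (cyc_orbit f x)"

lemma cyc_orbit_eq_range: "cyc_orbit f x = range (\<lambda>n. (f ^^ n) x)"
  unfolding cyc_orbit_def by blast

lemma self_in_cyc_orbit: "x \<in> cyc_orbit f x"
  unfolding cyc_orbit_def by (metis (mono_tags) CollectI funpow_0)

lemma funpow_in_cyc_orbit: "(f ^^ n) x \<in> cyc_orbit f x"
  unfolding cyc_orbit_def by blast

lemma cyc_orbit_invariant: "f ` cyc_orbit f x \<subseteq> cyc_orbit f x"
proof (rule image_subsetI)
  fix z assume "z \<in> cyc_orbit f x"
  then obtain n where "z = (f ^^ n) x" unfolding cyc_orbit_def by blast
  then have "f z = (f ^^ Suc n) x" by simp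
  then show "f z \<in> cyc_orbit f x" using funpow_in_cyc_orbit by metis
qed

lemma funpow_mem_invariant: "f ` S \<subseteq> S \<Longrightarrow> x \<in> S \<Longrightarrow> (f ^^ n) x \<in> S"
  by (induction n) auto

lemma cyc_orbit_subset_invariant: "f ` S \<subseteq> S \<Longrightarrow> x \<in> S \<Longrightarrow> cyc_orbit f x \<subseteq> S"
  unfolding cyc_orbit_def using funpow_mem_invariant[of f S x] by blast

lemma cycle_type_Un:
  assumes "finite A" "finite B" "A \<inter> B = {}" "f ` A \<subseteq> A" "f ` B \<subseteq> B"
  shows "cycle_type f (A \<union> B) = cycle_type f A + cycle_type f B"
proof -
  have "cyc_orbit f a \<noteq> cyc_orbit f b" if "a \<in> A" "b \<in> B" for a b
    using self_in_cyc_orbit[of a f] cyc_orbit_subset_invariant[OF assms(5) \<open>b \<in> B\<close>]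
      assms(3) that by auto
  then have "cyc_orbit f ` A \<inter> cyc_orbit f ` B = {}" by blast
  then show ?thesis
    unfolding cycle_type_def image_Un using assms(1,2) by (simp add: mset_set_Union)
qed

lemma cycle_type_fixpoint: "f c = c \<Longrightarrow> cycle_type f {c} = {#1#}"
proof -
  assume "f c = c"
  then have "(f ^^ n) c = c" for n by (induction n) auto
  then have "cyc_orbit f c = {c}" unfolding cyc_orbit_def by auto
  then show ?thesis unfolding cycle_type_def by simp
qed

locale perm_on =
  fixes f :: "'a \<Rightarrow> 'a" and P :: "'a set"
  assumes finite_P: "finite P" and bij_f: "bij_betw f P P"
begin

lemma image_subset_P: "f ` P \<subseteq> P"
  using bij_f by (simp add: bij_betw_def)

lemma funpow_mem: "x \<in> P \<Longrightarrow> (f ^^ n) x \<in> P"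
  using funpow_mem_invariant[OF image_subset_P] .

lemma cyc_orbit_subset: "x \<in> P \<Longrightarrow> cyc_orbit f x \<subseteq> P"
  using cyc_orbit_subset_invariant[OF image_subset_P] .

lemma invariant_Diff:
  assumes S: "S \<subseteq> P" "f ` S \<subseteq> S" shows "f ` (P - S) \<subseteq> P - S"
proof
  have inj: "inj_on f P" using bij_f by (simp add: bij_betw_def)
  have "f ` S = S"
    using S finite_subset[OF S(1) finite_P] inj_on_subset[OF inj S(1)] by (intro endo_inj_surj)
  fix y assume "y \<in> f ` (P - S)"
  then obtain x where x: "x \<in> P" "x \<notin> S" "y = f x" by blast
  have "f x \<notin> f ` S"
    using x inj S(1) by (auto simp: inj_on_def)
  then show "y \<in> P - S" using x image_subset_P \<open>f ` S = S\<close> by auto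
qed

lemma perm_on_subset:
  assumes "S \<subseteq> P" "f ` S \<subseteq> S" shows "perm_on f S"
proof
  show "finite S" using finite_subset[OF assms(1) finite_P] .
  have "inj_on f S" using bij_f assms(1) by (auto simp: bij_betw_def intro: inj_on_subset)
  then show "bij_betw f S S"
    using endo_inj_surj[OF \<open>finite S\<close> assms(2)] by (simp add: bij_betw_def)
qed

lemma cycle_type_Diff:
  assumes "S \<subseteq> P" "f ` S \<subseteq> S"
  shows "cycle_type f P = cycle_type f S + cycle_type f (P - S)"
proof -
  have "P = S \<union> (P - S)" using assms(1) by blast
  then show ?thesis
    using cycle_type_Un[of S "P - S"] assms invariant_Diff[OF assms] finite_P
      finite_subset[OF assms(1)] by (metis Diff_disjoint finite_Diff)
qed

lemma exists_period:
  assumes "x \<in> P" shows "\<exists>n>0. (f ^^ n) x = x"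
proof -
  have "range (\<lambda>k. (f ^^ k) x) \<subseteq> P" using funpow_mem assms by blast
  then have "\<not> inj (\<lambda>k. (f ^^ k) x)"
    using finite_P by (meson finite_imageD finite_subset infinite_UNIV_nat)
  then obtain i j where "i < j" "(f ^^ i) x = (f ^^ j) x"
    unfolding inj_def by (metis linorder_neqE_nat)
  moreover have "(f ^^ j) x = (f ^^ i) ((f ^^ (j - i)) x)"
    using \<open>i < j\<close> by (metis funpow_add le_add_diff_inverse less_imp_le o_apply)
  moreover have "inj_on (f ^^ i) P" using bij_betw_funpow[OF bij_f] bij_betw_def by blast
  ultimately have "(f ^^ (j - i)) x = x"
    using assms funpow_mem unfolding inj_on_def by metis
  then show ?thesis using \<open>i < j\<close> by (intro exI[of _ "j - i"]) simp
qed

lemma funpow_eq_self_iff: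
  assumes "x \<in> P" shows "(f ^^ n) x = x \<longleftrightarrow> cycle_len f x dvd n"
proof -
  define L where "L = (LEAST n. 0 < n \<and> (f ^^ n) x = x)"
  have L: "0 < L" "(f ^^ L) x = x"
    using LeastI_ex[OF exists_period[OF assms]] unfolding L_def by auto
  have least: "(f ^^ m) x \<noteq> x" if "0 < m" "m < L" for m
    using not_less_Least that unfolding L_def by blast
  have "cyc_orbit f x = (\<lambda>k. (f ^^ k) x) ` {0..<L}"
  proof (intro equalityI subsetI)
    fix y assume "y \<in> cyc_orbit f x"
    then obtain n where "y = (f ^^ n) x" unfolding cyc_orbit_def by blast
    then show "y \<in> (\<lambda>k. (f ^^ k) x) ` {0..<L}"
      using funpow_mod_eq[OF L(2), of n] L(1) by (intro image_eqI[of _ _ "n mod L"]) auto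
  qed (auto simp: cyc_orbit_def)
  then have "cycle_len f x = L"
    using inj_on_funpow_least[OF L(2) least] by (simp add: card_image)
  moreover have "(f ^^ n) x = x \<longleftrightarrow> L dvd n"
    using funpow_mod_eq[OF L(2), of n] least[of "n mod L"] L(1)
    by (metis dvd_eq_mod_eq_0 funpow_0 mod_less_divisor neq0_conv)
  ultimately show ?thesis by simp
qed

lemma cycle_len_eqI:
  "x \<in> P \<Longrightarrow> (\<And>n. (f ^^ n) x = x \<longleftrightarrow> d dvd n) \<Longrightarrow> cycle_len f x = d"
  using funpow_eq_self_iff by (metis dvd_antisym dvd_refl)

lemma cycle_len_pos: "x \<in> P \<Longrightarrow> 0 < cycle_len f x"
  using cyc_orbit_subset finite_P self_in_cyc_orbit
  by (metis card_gt_0_iff empty_iff finite_subset)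

lemma funpow_eq_funpow_iff:
  assumes "x \<in> P"
  shows "(f ^^ m) x = (f ^^ n) x \<longleftrightarrow> m mod cycle_len f x = n mod cycle_len f x"
proof -
  have *: "(f ^^ m) x = (f ^^ n) x \<longleftrightarrow> m mod cycle_len f x = n mod cycle_len f x" if "m \<le> n" for m n
  proof -
    have "(f ^^ n) x = (f ^^ m) ((f ^^ (n - m)) x)"
      using that by (metis funpow_add le_add_diff_inverse o_apply)
    moreover have "inj_on (f ^^ m) P" using bij_betw_funpow[OF bij_f] bij_betw_def by blast
    ultimately have "(f ^^ m) x = (f ^^ n) x \<longleftrightarrow> (f ^^ (n - m)) x = x"
      using assms funpow_mem unfolding inj_on_def by metis
    also have "\<dots> \<longleftrightarrow> m mod cycle_len f x = n mod cycle_len f x"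
      using funpow_eq_self_iff[OF assms] mod_eq_dvd_iff_nat[OF that] by metis
    finally show ?thesis .
  qed
  show ?thesis using *[of m n] *[of n m] by (cases "m \<le> n") auto
qed

lemma cyc_orbit_eq:
  assumes "x \<in> P" "y \<in> cyc_orbit f x" shows "cyc_orbit f y = cyc_orbit f x"
proof -
  obtain k where k: "y = (f ^^ k) x" using assms(2) unfolding cyc_orbit_def by blast
  define L where "L = cycle_len f x"
  have "(f ^^ i) x = (f ^^ (i + (L - 1) * k)) y" for i
  proof -
    have "i + (L - 1) * k + k = i + L * k"
      using cycle_len_pos[OF assms(1)] unfolding L_def by (cases "cycle_len f x") auto
    then have "(f ^^ (i + (L - 1) * k)) y = (f ^^ (i + L * k)) x"
      unfolding k by (metis funpow_add o_apply)
    also have "\<dots> = (f ^^ i) x"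
      using funpow_eq_funpow_iff[OF assms(1)] unfolding L_def by simp
    finally show ?thesis by simp
  qed
  moreover have "(f ^^ i) y = (f ^^ (i + k)) x" for i by (simp add: k funpow_add)
  ultimately show ?thesis unfolding cyc_orbit_def by blast
qed


lemma cycle_type_uniform:
  assumes L: "\<And>x. x \<in> P \<Longrightarrow> cycle_len f x = L"
  shows "cycle_type f P = replicate_mset (card P div L) L" and "L dvd card P"
proof -
  let ?O = "cyc_orbit f ` P"
  have fin: "finite C" if "C \<in> ?O" for C
    using that cyc_orbit_subset finite_subset[OF _ finite_P] by blast
  have card_C: "card C = L" if "C \<in> ?O" for C using that L by blast
  have "pairwise disjnt ?O"
  proof (rule pairwiseI)
    fix C D assume CD: "C \<in> ?O" "D \<in> ?O" "C \<noteq> D"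
    then obtain a b where ab: "a \<in> P" "b \<in> P" "C = cyc_orbit f a" "D = cyc_orbit f b" by blast
    show "disjnt C D"
    proof (rule ccontr)
      assume "\<not> disjnt C D"
      then obtain z where "z \<in> C" "z \<in> D" unfolding disjnt_def by blast
      then have "C = D"
        using cyc_orbit_eq[OF ab(1), of z] cyc_orbit_eq[OF ab(2), of z] ab(3,4) by simp
      with CD(3) show False ..
    qed
  qed
  then have "card (\<Union> ?O) = (\<Sum>C\<in>?O. card C)" using fin by (rule card_Union_disjoint)
  moreover have "\<Union> ?O = P"
    using cyc_orbit_subset self_in_cyc_orbit[of _ f] by (intro equalityI) blast+
  ultimately have card_P: "card P = card ?O * L" using card_C by simp
  have "cycle_type f P = image_mset (\<lambda>_. L) (mset_set ?O)"
    unfolding cycle_type_def using finite_P card_C by (intro image_mset_cong) simp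
  then have ct: "cycle_type f P = replicate_mset (card ?O) L" by (simp add: image_mset_const_eq)
  show "cycle_type f P = replicate_mset (card P div L) L" "L dvd card P"
  proof (atomize (full), cases "P = {}")
    case False
    then have "0 < L" using L cycle_len_pos by blast
    then show "cycle_type f P = replicate_mset (card P div L) L \<and> L dvd card P"
      using ct card_P by simp
  qed (use ct in simp)
qed

lemma cycle_type_fixpoint_uniform:
  assumes c: "c \<in> P" "f c = c" and d: "\<And>x. x \<in> P - {c} \<Longrightarrow> cycle_len f x = d"
  shows "cycle_type f P = replicate_mset ((card P - 1) div d) d + {#1#}" and "d dvd card P - 1"
proof -
  have inv: "f ` {c} \<subseteq> {c}" using c by simp
  interpret rest: perm_on f "P - {c}"
    using c(1) by (intro perm_on_subset invariant_Diff[OF _ inv]) auto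
  have "card (P - {c}) = card P - 1" using c(1) finite_P by simp
  then show "cycle_type f P = replicate_mset ((card P - 1) div d) d + {#1#}" "d dvd card P - 1"
    using cycle_type_Diff[OF _ inv] c rest.cycle_type_uniform[OF d] cycle_type_fixpoint[of f c]
    by (simp_all add: add.commute)
qed

lemma cycle_type_id:
  assumes id: "\<And>x. x \<in> P \<Longrightarrow> f x = x" and c: "c \<in> P"
  shows "cycle_type f P = replicate_mset (card P - 1) 1 + {#1#}"
proof -
  have "cycle_len f x = 1" if x: "x \<in> P" for x
  proof (rule cycle_len_eqI[OF x])
    have "(f ^^ n) x = x" for n by (induction n) (simp_all add: id funpow_mem x)
    then show "(f ^^ n) x = x \<longleftrightarrow> 1 dvd n" for n by simp
  qed
  then show ?thesis using cycle_type_fixpoint_uniform(1)[OF c id[OF c], of 1] by simp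
qed

lemma cycle_type_remove_orbit:
  assumes "x \<in> P"
  shows "cycle_type f P = cycle_type f (P - cyc_orbit f x) + {#cycle_len f x#}"
    and "perm_on f (P - cyc_orbit f x)"
proof -
  let ?O = "cyc_orbit f x"
  have inv: "f ` ?O \<subseteq> ?O" by (fact cyc_orbit_invariant)
  have "cyc_orbit f z = ?O" if "z \<in> ?O" for z using cyc_orbit_eq[OF assms that] .
  then have "cyc_orbit f ` ?O = {?O}" using self_in_cyc_orbit[of x f] by blast
  then have "cycle_type f ?O = {#cycle_len f x#}" unfolding cycle_type_def by simp
  then show "cycle_type f P = cycle_type f (P - ?O) + {#cycle_len f x#}"
    using cycle_type_Diff[OF cyc_orbit_subset[OF assms] inv] by (simp add: add.commute)
  show "perm_on f (P - ?O)"
    by (rule perm_on_subset[OF _ invariant_Diff[OF cyc_orbit_subset[OF assms] inv]]) blast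
qed

end

section \<open>Permutations with equal cycle type are conjugate\<close>

definition conjugating :: "('a \<Rightarrow> 'b) \<Rightarrow> ('a \<Rightarrow> 'a) \<Rightarrow> 'a set \<Rightarrow> ('b \<Rightarrow> 'b) \<Rightarrow> 'b set \<Rightarrow> bool"
  where "conjugating \<phi> f A g B \<longleftrightarrow> bij_betw \<phi> A B \<and> (\<forall>x\<in>A. \<phi> (f x) = g (\<phi> x))"

lemma conjugating_Un:
  assumes \<phi>\<^sub>1: "conjugating \<phi>\<^sub>1 f A\<^sub>1 g B\<^sub>1" and \<phi>\<^sub>2: "conjugating \<phi>\<^sub>2 f A\<^sub>2 g B\<^sub>2"
    and disj: "A\<^sub>1 \<inter> A\<^sub>2 = {}" "B\<^sub>1 \<inter> B\<^sub>2 = {}" and inv: "f ` A\<^sub>1 \<subseteq> A\<^sub>1" "f ` A\<^sub>2 \<subseteq> A\<^sub>2"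
  shows "conjugating (\<lambda>x. if x \<in> A\<^sub>1 then \<phi>\<^sub>1 x else \<phi>\<^sub>2 x) f (A\<^sub>1 \<union> A\<^sub>2) g (B\<^sub>1 \<union> B\<^sub>2)"
    (is "conjugating ?\<phi> _ _ _ _")
proof -
  have on1: "?\<phi> x = \<phi>\<^sub>1 x" if "x \<in> A\<^sub>1" for x using that by simp
  have on2: "?\<phi> x = \<phi>\<^sub>2 x" if "x \<in> A\<^sub>2" for x using that disj(1) by auto
  have "bij_betw ?\<phi> A\<^sub>1 B\<^sub>1" using \<phi>\<^sub>1 bij_betw_cong[of A\<^sub>1 ?\<phi> \<phi>\<^sub>1] on1
    unfolding conjugating_def by blast
  moreover have "bij_betw ?\<phi> A\<^sub>2 B\<^sub>2" using \<phi>\<^sub>2 bij_betw_cong[of A\<^sub>2 ?\<phi> \<phi>\<^sub>2] on2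
    unfolding conjugating_def by blast
  moreover have "?\<phi> (f x) = g (?\<phi> x)" if "x \<in> A\<^sub>1 \<union> A\<^sub>2" for x
  proof (cases "x \<in> A\<^sub>1")
    case True
    then have "f x \<in> A\<^sub>1" using inv(1) by blast
    then show ?thesis
      using True \<phi>\<^sub>1 unfolding conjugating_def on1[OF True] on1[OF \<open>f x \<in> A\<^sub>1\<close>] by blast
  next
    case False
    then have "x \<in> A\<^sub>2" using that by blast
    moreover have "f x \<in> A\<^sub>2" using inv(2) \<open>x \<in> A\<^sub>2\<close> by blast
    ultimately show ?thesis
      using \<phi>\<^sub>2 unfolding conjugating_def on2[OF \<open>x \<in> A\<^sub>2\<close>] on2[OF \<open>f x \<in> A\<^sub>2\<close>] by blast
  qed
  ultimately show ?thesis unfolding conjugating_def using bij_betw_combine[OF _ _ disj(2)] by blast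
qed

lemma conjugating_cyc_orbits:
  assumes "perm_on f A" "perm_on g B" "x \<in> A" "y \<in> B" "cycle_len f x = cycle_len g y"
  shows "\<exists>\<phi>. conjugating \<phi> f (cyc_orbit f x) g (cyc_orbit g y)"
proof -
  have same: "(f ^^ m) x = (f ^^ n) x \<longleftrightarrow> (g ^^ m) y = (g ^^ n) y" for m n
    using perm_on.funpow_eq_funpow_iff[OF assms(1,3)] perm_on.funpow_eq_funpow_iff[OF assms(2,4)]
      assms(5) by simp
  define \<phi> where "\<phi> z = (g ^^ (SOME n. (f ^^ n) x = z)) y" for z
  have \<phi>: "\<phi> ((f ^^ n) x) = (g ^^ n) y" for n
    unfolding \<phi>_def using someI[of "\<lambda>k. (f ^^ k) x = (f ^^ n) x" n] same by blast
  have "inj_on \<phi> (cyc_orbit f x)"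
  proof (rule inj_onI)
    fix z\<^sub>1 z\<^sub>2 assume "z\<^sub>1 \<in> cyc_orbit f x" "z\<^sub>2 \<in> cyc_orbit f x" "\<phi> z\<^sub>1 = \<phi> z\<^sub>2"
    then show "z\<^sub>1 = z\<^sub>2" unfolding cyc_orbit_eq_range using \<phi> same by auto
  qed
  moreover have "\<phi> ` cyc_orbit f x = cyc_orbit g y"
    unfolding cyc_orbit_eq_range image_image \<phi> ..
  moreover have "\<phi> (f z) = g (\<phi> z)" if z: "z \<in> cyc_orbit f x" for z
  proof -
    obtain n where "z = (f ^^ n) x" using z unfolding cyc_orbit_eq_range by blast
    then show ?thesis using \<phi>[of "Suc n"] \<phi>[of n] by simp
  qed
  ultimately show ?thesis unfolding conjugating_def bij_betw_def by blast
qed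

theorem conjugating_if_cycle_type_eq:
  assumes "perm_on f A" "perm_on g B" "cycle_type f A = cycle_type g B"
  shows "\<exists>\<phi>. conjugating \<phi> f A g B"
  using assms
proof (induction "card A" arbitrary: A B rule: less_induct)
  case less
  interpret f: perm_on f A by (fact less.prems(1))
  interpret g: perm_on g B by (fact less.prems(2))
  show ?case
  proof (cases "A = {}")
    case True
    then have "B = {}"
      using less.prems(3) g.finite_P by (simp add: cycle_type_def mset_set_empty_iff)
    with True show ?thesis
      unfolding conjugating_def by (intro exI[of _ "\<lambda>_. undefined"]) (simp add: bij_betw_def)
  next
    case False
    then obtain x where x: "x \<in> A" by blast
    then have "cycle_len f x \<in># cycle_type f A"
      using f.finite_P by (simp add: cycle_type_def)
    then have "cycle_len f x \<in># cycle_type g B" using less.prems(3) by simp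
    then obtain y where y: "y \<in> B" "cycle_len g y = cycle_len f x"
      using g.finite_P by (auto simp: cycle_type_def)
    let ?Ox = "cyc_orbit f x" and ?Oy = "cyc_orbit g y"
    obtain \<phi>\<^sub>0 where \<phi>\<^sub>0: "conjugating \<phi>\<^sub>0 f ?Ox g ?Oy"
      using conjugating_cyc_orbits[OF less.prems(1,2) x y(1)] y(2) by metis
    have "card (A - ?Ox) < card A"
      using f.finite_P x self_in_cyc_orbit[of x f] by (intro psubset_card_mono) auto
    moreover have "cycle_type f (A - ?Ox) = cycle_type g (B - ?Oy)"
      using f.cycle_type_remove_orbit(1)[OF x] g.cycle_type_remove_orbit(1)[OF y(1)]
        less.prems(3) y(2) by simp
    ultimately obtain \<psi> where \<psi>: "conjugating \<psi> f (A - ?Ox) g (B - ?Oy)"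
      using less.hyps f.cycle_type_remove_orbit(2)[OF x] g.cycle_type_remove_orbit(2)[OF y(1)]
      by blast
    have inv: "f ` ?Ox \<subseteq> ?Ox" by (fact cyc_orbit_invariant)
    then have "f ` (A - ?Ox) \<subseteq> A - ?Ox" by (rule f.invariant_Diff[OF f.cyc_orbit_subset[OF x]])
    with inv have "conjugating (\<lambda>z. if z \<in> ?Ox then \<phi>\<^sub>0 z else \<psi> z)
        f (?Ox \<union> (A - ?Ox)) g (?Oy \<union> (B - ?Oy))"
      using conjugating_Un[OF \<phi>\<^sub>0 \<psi>] by blast
    moreover have "?Ox \<union> (A - ?Ox) = A" "?Oy \<union> (B - ?Oy) = B"
      using f.cyc_orbit_subset[OF x] g.cyc_orbit_subset[OF y(1)] by auto
    ultimately show ?thesis by metis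
  qed
qed


section \<open>Transport of an abelian group structure\<close>

definition pullback_monoid :: "'a set \<Rightarrow> ('a \<Rightarrow> 'b) \<Rightarrow> ('b, 'c) monoid_scheme \<Rightarrow> 'a monoid" where
  "pullback_monoid A \<phi> H =
     \<lparr>carrier = A, monoid.mult = (\<lambda>x y. inv_into A \<phi> (\<phi> x \<otimes>\<^bsub>H\<^esub> \<phi> y)), one = inv_into A \<phi> \<one>\<^bsub>H\<^esub>\<rparr>"

lemma iso_pullback_monoid:
  assumes "bij_betw \<phi> A (carrier H)"
  shows "inv_into A \<phi> \<in> iso H (pullback_monoid A \<phi> H)"
proof -
  have "inv_into A \<phi> \<in> hom H (pullback_monoid A \<phi> H)"
  proof (rule homI)
    fix u v assume "u \<in> carrier H" "v \<in> carrier H"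
    then show "inv_into A \<phi> (u \<otimes>\<^bsub>H\<^esub> v)
        = inv_into A \<phi> u \<otimes>\<^bsub>pullback_monoid A \<phi> H\<^esub> inv_into A \<phi> v"
      using assms by (simp add: pullback_monoid_def bij_betw_inv_into_right)
  qed (use assms in \<open>auto simp: pullback_monoid_def bij_betw_def inv_into_into\<close>)
  then show ?thesis
    using bij_betw_inv_into[OF assms] by (simp add: iso_def pullback_monoid_def)
qed

lemma comm_group_pullback_monoid:
  assumes "comm_group H" "bij_betw \<phi> A (carrier H)"
  shows "comm_group (pullback_monoid A \<phi> H)"
proof -
  let ?\<psi> = "inv_into A \<phi>"
  have "?\<psi> \<in> hom H (pullback_monoid A \<phi> H)"
    using iso_pullback_monoid[OF assms(2)] by (simp add: iso_def)
  then have "comm_group ((pullback_monoid A \<phi> H)\<lparr>carrier := ?\<psi> ` carrier H, one := ?\<psi> \<one>\<^bsub>H\<^esub>\<rparr>)"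
    by (rule comm_group.hom_imp_img_comm_group[OF assms(1)])
  moreover have "?\<psi> ` carrier H = A"
    using bij_betw_inv_into[OF assms(2)] by (simp add: bij_betw_def)
  ultimately show ?thesis by (simp add: pullback_monoid_def)
qed

lemma automorphism_pullback_monoid:
  assumes H: "comm_group H" and \<sigma>: "\<sigma> \<in> iso H H"
    and \<phi>: "conjugating \<phi> f A \<sigma> (carrier H)" and f: "f ` A \<subseteq> A"
  shows "f \<in> iso (pullback_monoid A \<phi> H) (pullback_monoid A \<phi> H)"
proof -
  let ?G = "pullback_monoid A \<phi> H" and ?\<psi> = "inv_into A \<phi>"
  have bij: "bij_betw \<phi> A (carrier H)" using \<phi> by (simp add: conjugating_def)
  interpret G: comm_group ?G by (rule comm_group_pullback_monoid[OF H bij])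
  interpret H: comm_group H by (fact H)
  have \<psi>: "?\<psi> \<in> iso H ?G" by (rule iso_pullback_monoid[OF bij])
  then have "inv_into (carrier H) ?\<psi> \<in> iso ?G H" by (rule H.iso_set_sym)
  then have "?\<psi> \<circ> \<sigma> \<circ> inv_into (carrier H) ?\<psi> \<in> iso ?G ?G"
    using \<sigma> \<psi> by (meson iso_set_trans)
  moreover have "f x = (?\<psi> \<circ> \<sigma> \<circ> inv_into (carrier H) ?\<psi>) x" if "x \<in> carrier ?G" for x
  proof -
    have x: "x \<in> A" using that by (simp add: pullback_monoid_def)
    then have "(?\<psi> \<circ> \<sigma> \<circ> inv_into (carrier H) ?\<psi>) x = ?\<psi> (\<phi> (f x))"
      using \<phi> inv_into_inv_into_eq[OF bij] by (simp add: conjugating_def)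
    also have "\<dots> = f x"
      using f x bij by (simp add: bij_betw_def inv_into_f_f image_subset_iff)
    finally show ?thesis by simp
  qed
  ultimately show ?thesis by (rule G.iso_eq)
qed

definition is_abelian_automorphism :: "('a \<Rightarrow> 'a) \<Rightarrow> 'a set \<Rightarrow> bool" where
  "is_abelian_automorphism f A \<longleftrightarrow> (\<exists>G :: 'a monoid. carrier G = A \<and> comm_group G \<and> f \<in> iso G G)"

theorem is_abelian_automorphism_if_cycle_type_eq:
  fixes H :: "('b, 'c) monoid_scheme"
  assumes H: "comm_group H" "finite (carrier H)" "\<sigma> \<in> iso H H"
    and f: "finite A" "bij_betw f A A" and ct: "cycle_type \<sigma> (carrier H) = cycle_type f A"
  shows "is_abelian_automorphism f A"
proof -
  have "perm_on f A" "perm_on \<sigma> (carrier H)"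
    using f H by unfold_locales (simp_all add: iso_def)
  then obtain \<phi> where \<phi>: "conjugating \<phi> f A \<sigma> (carrier H)"
    using conjugating_if_cycle_type_eq ct by metis
  then have "bij_betw \<phi> A (carrier H)" by (simp add: conjugating_def)
  then show ?thesis
    using comm_group_pullback_monoid automorphism_pullback_monoid[OF H(1,3) \<phi>] H(1) f(2)
    unfolding is_abelian_automorphism_def
    by (intro exI[of _ "pullback_monoid A \<phi> H"]) (simp add: pullback_monoid_def bij_betw_def)
qed

section \<open>Automorphisms of abelian groups of order \<open>p\<^sup>2\<close>\<close>

locale aut_p2 = comm_group G for G (structure) +
  fixes f :: "'a \<Rightarrow> 'a" and p :: nat
  assumes prime_p: "Factorial_Ring.prime p" and card_G: "card (carrier G) = p ^ 2"
    and aut: "f \<in> iso G G"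
begin

lemma two_le_p: "2 \<le> p"
  using prime_p by (rule prime_ge_2_nat)

lemma finite_G: "finite (carrier G)"
  using card_G two_le_p by (intro card_ge_0_finite) simp

sublocale perm_on f "carrier G"
  using finite_G aut by unfold_locales (simp_all add: Group.iso_def)

lemma group_hom_funpow: "group_hom G G (f ^^ n)"
proof (induction n)
  case 0
  show ?case by unfold_locales (simp add: hom_def)
next
  case (Suc n)
  then interpret group_hom G G "f ^^ n" .
  have "f \<in> hom G G" using aut by (simp add: iso_def)
  then have "f \<circ> (f ^^ n) \<in> hom G G" using hom_closed by (auto simp: hom_def)
  then show ?case by unfold_locales (simp only: funpow.simps(2))
qed

lemma aut_one: "f \<one> = \<one>"
  using group_hom.hom_one[OF group_hom_funpow[of 1]] by simp

lemma exists_nonunit: obtains x where "x \<in> carrier G - {\<one>}"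
proof -
  have "1 < card (carrier G)" using card_G two_le_p one_less_power[of p 2] by simp
  then have "\<not> carrier G \<subseteq> {\<one>}" using card_mono[of "{\<one>}" "carrier G"] by auto
  then show ?thesis using that by blast
qed

definition Fix :: "nat \<Rightarrow> 'a set" where
  "Fix n = {x \<in> carrier G. (f ^^ n) x = x}"

lemma subgroup_Fix: "subgroup (Fix n) G"
proof -
  interpret group_hom G G "f ^^ n" by (rule group_hom_funpow)
  show ?thesis by (rule subgroupI) (auto simp: Fix_def)
qed

lemma Fix_invariant: "f ` Fix n \<subseteq> Fix n"
  unfolding Fix_def using image_subset_P by (auto simp: funpow_swap1[symmetric])

lemma mem_Fix_iff: "x \<in> carrier G \<Longrightarrow> x \<in> Fix n \<longleftrightarrow> cycle_len f x dvd n"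
  by (simp add: Fix_def funpow_eq_self_iff)

definition invariant_line :: "'a set \<Rightarrow> bool" where
  "invariant_line H \<longleftrightarrow> subgroup H G \<and> card H = p \<and> f ` H \<subseteq> H"

lemma subgroup_cases:
  assumes "subgroup H G" shows "H = {\<one>} \<or> card H = p \<or> H = carrier G"
proof -
  have "card (rcosets H) * card H = p ^ 2"
    using lagrange[OF assms] card_G by (simp add: order_def)
  then have "card H dvd p ^ 2" by (metis dvd_triv_right)
  then obtain i where i: "i \<le> 2" "card H = p ^ i" using divides_primepow_nat[OF prime_p] by blast
  have "H = {\<one>}" if one: "card H = 1"
  proof -
    obtain a where "H = {a}" using card_1_singletonE[OF one] .
    then show ?thesis using subgroup.one_closed[OF assms] by simp
  qed
  moreover have "H = carrier G" if "card H = p ^ 2"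
    using card_subset_eq[OF finite_G subgroup.subset[OF assms]] that card_G by simp
  moreover have "i = 0 \<or> i = 1 \<or> i = 2" using i(1) by linarith
  ultimately show ?thesis using i(2) by auto
qed

lemma subgroup_of_prime_order_cases:
  assumes "subgroup S G" "subgroup H G" "S \<subseteq> H" "card H = p"
  shows "S = {\<one>} \<or> S = H"
proof -
  have fin: "finite H" using finite_subset[OF subgroup.subset[OF assms(2)] finite_G] .
  have "card S \<le> p" using card_mono[OF fin assms(3)] assms(4) by simp
  moreover have "p < p ^ 2" using two_le_p by (simp add: power2_eq_square)
  ultimately have "S = {\<one>} \<or> card S = p" using subgroup_cases[OF assms(1)] card_G by auto
  then show ?thesis using card_subset_eq[OF fin assms(3)] assms(4) by auto
qed

lemma invariant_subgroup_cases:
  "subgroup H G \<Longrightarrow> f ` H \<subseteq> H \<Longrightarrow> H = {\<one>} \<or> invariant_line H \<or> H = carrier G"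
  using subgroup_cases by (auto simp: invariant_line_def)

lemma invariant_lines_inter:
  assumes "invariant_line H\<^sub>1" "invariant_line H\<^sub>2" "H\<^sub>1 \<noteq> H\<^sub>2"
  shows "H\<^sub>1 \<inter> H\<^sub>2 = {\<one>}"
proof -
  have "subgroup (H\<^sub>1 \<inter> H\<^sub>2) G" "subgroup H\<^sub>1 G" "subgroup H\<^sub>2 G" "card H\<^sub>1 = p" "card H\<^sub>2 = p"
    using assms(1,2) subgroups_Inter_pair by (auto simp: invariant_line_def)
  then show ?thesis
    using subgroup_of_prime_order_cases[of "H\<^sub>1 \<inter> H\<^sub>2"] assms(3) by (metis Int_lower1 Int_lower2)
qed

lemma cycle_len_dvd_on_line:
  assumes H: "subgroup H G" "card H = p" and x: "x \<in> H - {\<one>}" and y: "y \<in> H"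
  shows "cycle_len f y dvd cycle_len f x"
proof -
  have sub: "subgroup (Fix (cycle_len f x) \<inter> H) G"
    using subgroups_Inter_pair[OF subgroup_Fix H(1)] .
  have xG: "x \<in> carrier G" and yG: "y \<in> carrier G" using x y subgroup.subset[OF H(1)] by auto
  have "x \<in> Fix (cycle_len f x)" by (simp add: mem_Fix_iff[OF xG])
  then have "Fix (cycle_len f x) \<inter> H \<noteq> {\<one>}" using x by blast
  then have "Fix (cycle_len f x) \<inter> H = H"
    using subgroup_of_prime_order_cases[OF sub H(1) _ H(2)] by blast
  then have "y \<in> Fix (cycle_len f x)" using y by blast
  then show ?thesis by (simp add: mem_Fix_iff[OF yG])
qed

lemma cycle_len_eq_on_line:
  assumes "subgroup H G" "card H = p" "x \<in> H - {\<one>}" "y \<in> H - {\<one>}"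
  shows "cycle_len f y = cycle_len f x"
  using cycle_len_dvd_on_line[OF assms(1-3), of y] cycle_len_dvd_on_line[OF assms(1,2,4), of x]
    assms(3,4) by (simp add: dvd_antisym)

lemma invariant_Diff_one:
  assumes "S \<subseteq> carrier G" "f ` S \<subseteq> S" shows "f ` (S - {\<one>}) \<subseteq> S - {\<one>}"
proof -
  have "f ` (carrier G - {\<one>}) \<subseteq> carrier G - {\<one>}"
    using aut_one by (intro invariant_Diff) simp_all
  then show ?thesis using assms by blast
qed

lemma cycle_type_line:
  assumes "invariant_line H" "x \<in> H - {\<one>}"
  shows "cycle_type f (H - {\<one>}) = replicate_mset ((p - 1) div cycle_len f x) (cycle_len f x)"
    and "cycle_len f x dvd p - 1"
proof -
  have H: "subgroup H G" "card H = p" "f ` H \<subseteq> H" using assms(1) by (auto simp: invariant_line_def)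
  have "H - {\<one>} \<subseteq> carrier G" using subgroup.subset[OF H(1)] by blast
  then interpret line: perm_on f "H - {\<one>}"
    using invariant_Diff_one[OF subgroup.subset[OF H(1)] H(3)] by (rule perm_on_subset)
  have "card (H - {\<one>}) = p - 1" using H(2) subgroup.one_closed[OF H(1)] by simp
  moreover have "\<And>y. y \<in> H - {\<one>} \<Longrightarrow> cycle_len f y = cycle_len f x"
    using cycle_len_eq_on_line[OF H(1,2) assms(2)] .
  ultimately show
    "cycle_type f (H - {\<one>}) = replicate_mset ((p - 1) div cycle_len f x) (cycle_len f x)"
    "cycle_len f x dvd p - 1"
    using line.cycle_type_uniform by metis+
qed

lemma cycle_type_carrier:
  "cycle_type f (carrier G) = cycle_type f (carrier G - {\<one>}) + {#1#}"
  using cycle_type_Diff[of "{\<one>}"] cycle_type_fixpoint[of f \<one>] aut_one by (simp add: add.commute)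

lemma cycle_type_nonunit_Un:
  assumes "S \<union> T = carrier G - {\<one>}" "S \<inter> T = {}" "f ` S \<subseteq> S" "f ` T \<subseteq> T"
  shows "cycle_type f (carrier G) = cycle_type f S + cycle_type f T + {#1#}"
proof -
  have "finite S" "finite T" using assms(1) finite_G by (auto intro: finite_subset)
  then show ?thesis using cycle_type_carrier cycle_type_Un[OF _ _ assms(2-4)] assms(1) by simp
qed

lemma cycle_type_one_line:
  assumes H: "invariant_line H" and x: "x \<in> H - {\<one>}" "cycle_len f x = d"
    and off: "\<And>y. y \<in> carrier G - H \<Longrightarrow> cycle_len f y = p * d"
  shows "cycle_type f (carrier G)
    = replicate_mset ((p - 1) div d) (p * d) + replicate_mset ((p - 1) div d) d + {#1#}"
proof -
  have sub: "subgroup H G" and card_H: "card H = p" and inv: "f ` H \<subseteq> H"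
    using H by (auto simp: invariant_line_def)
  have HG: "H \<subseteq> carrier G" and one: "\<one> \<in> H"
    using subgroup.subset[OF sub] subgroup.one_closed[OF sub] by auto
  interpret rest: perm_on f "carrier G - H"
    using invariant_Diff[OF HG inv] by (intro perm_on_subset) auto
  have "card (carrier G - H) = p * (p - 1)"
    using card_Diff_subset[OF finite_subset[OF HG finite_G] HG] card_G card_H
    by (simp add: power2_eq_square diff_mult_distrib2)
  then have "cycle_type f (carrier G - H) = replicate_mset ((p - 1) div d) (p * d)"
    using rest.cycle_type_uniform(1)[OF off] two_le_p by simp
  moreover have "cycle_type f (carrier G)
      = cycle_type f (H - {\<one>}) + cycle_type f (carrier G - H) + {#1#}"
    using one HG invariant_Diff_one[OF HG inv] invariant_Diff[OF HG inv]
    by (intro cycle_type_nonunit_Un) auto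
  ultimately show ?thesis using cycle_type_line(1)[OF H x(1)] x(2) by (simp add: add.commute)
qed

lemma line_product_decomposition:
  assumes H: "subgroup H\<^sub>1 G" "subgroup H\<^sub>2 G" "card H\<^sub>1 = p" "card H\<^sub>2 = p" "H\<^sub>1 \<inter> H\<^sub>2 = {\<one>}"
  shows "bij_betw (\<lambda>(a, b). a \<otimes> b) (H\<^sub>1 \<times> H\<^sub>2) (carrier G)"
proof -
  interpret group_disjoint_sum G H\<^sub>1 H\<^sub>2
    by (intro group_disjoint_sum.intro is_group H(1,2))
  let ?\<mu> = "\<lambda>(a, b). a \<otimes> b"
  have "\<forall>a\<in>H\<^sub>1. \<forall>b\<in>H\<^sub>2. \<forall>a'\<in>H\<^sub>1. \<forall>b'\<in>H\<^sub>2. a \<otimes> b = a' \<otimes> b' \<longrightarrow> a = a' \<and> b = b'"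
    using cancel H(5) by simp
  then have inj: "inj_on ?\<mu> (H\<^sub>1 \<times> H\<^sub>2)"
    unfolding inj_on_def by fast
  moreover have sub: "?\<mu> ` (H\<^sub>1 \<times> H\<^sub>2) \<subseteq> carrier G"
    using subgroup.subset[OF H(1)] subgroup.subset[OF H(2)] by auto
  moreover have "card (?\<mu> ` (H\<^sub>1 \<times> H\<^sub>2)) = card (carrier G)"
    using card_image[OF inj] H(3,4) card_G by (simp add: card_cartesian_product power2_eq_square)
  ultimately show ?thesis
    unfolding bij_betw_def using card_subset_eq[OF finite_G sub] by simp
qed

lemma cycle_len_off_two_lines:
  assumes H\<^sub>1: "invariant_line H\<^sub>1" and H\<^sub>2: "invariant_line H\<^sub>2" and inter: "H\<^sub>1 \<inter> H\<^sub>2 = {\<one>}"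
    and x\<^sub>1: "x\<^sub>1 \<in> H\<^sub>1 - {\<one>}" and x\<^sub>2: "x\<^sub>2 \<in> H\<^sub>2 - {\<one>}" and z: "z \<in> carrier G - (H\<^sub>1 \<union> H\<^sub>2)"
  shows "cycle_len f z = lcm (cycle_len f x\<^sub>1) (cycle_len f x\<^sub>2)"
proof -
  have sub: "subgroup H\<^sub>1 G" "subgroup H\<^sub>2 G" and card: "card H\<^sub>1 = p" "card H\<^sub>2 = p"
    and inv: "f ` H\<^sub>1 \<subseteq> H\<^sub>1" "f ` H\<^sub>2 \<subseteq> H\<^sub>2"
    using H\<^sub>1 H\<^sub>2 by (auto simp: invariant_line_def)
  interpret group_disjoint_sum G H\<^sub>1 H\<^sub>2
    by (intro group_disjoint_sum.intro is_group sub)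
  have "\<forall>a\<in>H\<^sub>1. \<forall>b\<in>H\<^sub>2. \<forall>a'\<in>H\<^sub>1. \<forall>b'\<in>H\<^sub>2. a \<otimes> b = a' \<otimes> b' \<longrightarrow> a = a' \<and> b = b'"
    using cancel inter by simp
  then have unique: "a \<otimes> b = a' \<otimes> b' \<longleftrightarrow> a = a' \<and> b = b'"
    if "a \<in> H\<^sub>1" "b \<in> H\<^sub>2" "a' \<in> H\<^sub>1" "b' \<in> H\<^sub>2" for a b a' b'
    using that by fast
  have "z \<in> (\<lambda>(a, b). a \<otimes> b) ` (H\<^sub>1 \<times> H\<^sub>2)"
    using line_product_decomposition[OF sub card inter] z unfolding bij_betw_def by auto
  then obtain a b where ab: "a \<in> H\<^sub>1" "b \<in> H\<^sub>2" "z = a \<otimes> b" by auto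
  have aG: "a \<in> carrier G" and bG: "b \<in> carrier G"
    using ab subgroup.subset[OF sub(1)] subgroup.subset[OF sub(2)] by auto
  have "a \<noteq> \<one>" "b \<noteq> \<one>" using ab z aG bG by auto
  then have len: "cycle_len f a = cycle_len f x\<^sub>1" "cycle_len f b = cycle_len f x\<^sub>2"
    using cycle_len_eq_on_line[OF sub(1) card(1) x\<^sub>1] cycle_len_eq_on_line[OF sub(2) card(2) x\<^sub>2]
      ab by auto
  show ?thesis
  proof (rule cycle_len_eqI)
    show "z \<in> carrier G" using z by blast
    fix n
    interpret group_hom G G "f ^^ n" by (rule group_hom_funpow)
    have "(f ^^ n) z = (f ^^ n) a \<otimes> (f ^^ n) b" using ab aG bG by simp
    moreover have "(f ^^ n) a \<in> H\<^sub>1" "(f ^^ n) b \<in> H\<^sub>2"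
      using funpow_mem_invariant inv ab by metis+
    ultimately have "(f ^^ n) z = z \<longleftrightarrow> (f ^^ n) a = a \<and> (f ^^ n) b = b"
      using unique ab by simp
    also have "\<dots> \<longleftrightarrow> lcm (cycle_len f x\<^sub>1) (cycle_len f x\<^sub>2) dvd n"
      using funpow_eq_self_iff[OF aG] funpow_eq_self_iff[OF bG] len by simp
    finally show "(f ^^ n) z = z \<longleftrightarrow> lcm (cycle_len f x\<^sub>1) (cycle_len f x\<^sub>2) dvd n" .
  qed
qed

lemma cycle_type_two_lines:
  assumes H\<^sub>1: "invariant_line H\<^sub>1" and H\<^sub>2: "invariant_line H\<^sub>2" and "H\<^sub>1 \<noteq> H\<^sub>2"
    and x\<^sub>1: "x\<^sub>1 \<in> H\<^sub>1 - {\<one>}" "cycle_len f x\<^sub>1 = d\<^sub>1"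
    and x\<^sub>2: "x\<^sub>2 \<in> H\<^sub>2 - {\<one>}" "cycle_len f x\<^sub>2 = d\<^sub>2"
  shows "cycle_type f (carrier G) = replicate_mset ((p - 1) ^ 2 div lcm d\<^sub>1 d\<^sub>2) (lcm d\<^sub>1 d\<^sub>2)
    + replicate_mset ((p - 1) div d\<^sub>1) d\<^sub>1 + replicate_mset ((p - 1) div d\<^sub>2) d\<^sub>2 + {#1#}"
proof -
  have sub: "subgroup H\<^sub>1 G" "subgroup H\<^sub>2 G" and card: "card H\<^sub>1 = p" "card H\<^sub>2 = p"
    and inv: "f ` H\<^sub>1 \<subseteq> H\<^sub>1" "f ` H\<^sub>2 \<subseteq> H\<^sub>2"
    using H\<^sub>1 H\<^sub>2 by (auto simp: invariant_line_def)
  have HG: "H\<^sub>1 \<subseteq> carrier G" "H\<^sub>2 \<subseteq> carrier G" using sub subgroup.subset by auto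
  have inter: "H\<^sub>1 \<inter> H\<^sub>2 = {\<one>}" using invariant_lines_inter[OF H\<^sub>1 H\<^sub>2] assms(3) .
  define R where "R = carrier G - (H\<^sub>1 \<union> H\<^sub>2)"
  have inv_R: "f ` R \<subseteq> R" unfolding R_def using HG inv by (intro invariant_Diff) auto
  interpret R: perm_on f R using inv_R unfolding R_def by (intro perm_on_subset) auto
  have "card (H\<^sub>1 \<union> H\<^sub>2) = 2 * p - 1"
    using card_Un_Int[OF finite_subset[OF HG(1) finite_G] finite_subset[OF HG(2) finite_G]]
      card inter by simp
  then have "card R = (p - 1) ^ 2"
    using card_Diff_subset[of "H\<^sub>1 \<union> H\<^sub>2" "carrier G"] HG finite_G card_G two_le_p
    unfolding R_def by (simp add: finite_subset power2_eq_square algebra_simps)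
  then have "cycle_type f R = replicate_mset ((p - 1) ^ 2 div lcm d\<^sub>1 d\<^sub>2) (lcm d\<^sub>1 d\<^sub>2)"
    using R.cycle_type_uniform(1) cycle_len_off_two_lines[OF H\<^sub>1 H\<^sub>2 inter x\<^sub>1(1) x\<^sub>2(1)]
      x\<^sub>1(2) x\<^sub>2(2)
    unfolding R_def by simp
  moreover have "cycle_type f (H\<^sub>2 - {\<one>} \<union> R) = cycle_type f (H\<^sub>2 - {\<one>}) + cycle_type f R"
    using HG(2) finite_G inv_R invariant_Diff_one[OF HG(2) inv(2)]
    by (intro cycle_type_Un) (auto simp: R_def intro: finite_subset)
  moreover have "cycle_type f (carrier G)
      = cycle_type f (H\<^sub>1 - {\<one>}) + cycle_type f (H\<^sub>2 - {\<one>} \<union> R) + {#1#}"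
    using HG inter inv_R invariant_Diff_one[OF HG(1) inv(1)] invariant_Diff_one[OF HG(2) inv(2)]
    by (intro cycle_type_nonunit_Un) (auto simp: R_def)
  ultimately show ?thesis
    using cycle_type_line(1)[OF H\<^sub>1 x\<^sub>1(1)] cycle_type_line(1)[OF H\<^sub>2 x\<^sub>2(1)] x\<^sub>1(2) x\<^sub>2(2)
    by (simp add: add_ac)
qed

lemma invariant_line_nonunit:
  assumes "invariant_line H" obtains x where "x \<in> H - {\<one>}"
proof -
  have "card H = p" using assms by (simp add: invariant_line_def)
  then have "\<not> H \<subseteq> {\<one>}" using two_le_p card_mono[of "{\<one>}" H] by auto
  then show ?thesis using that by blast
qed

lemma ord_eq_on_line:
  assumes H: "subgroup H G" "card H = p" and h: "h \<in> H - {\<one>}"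
  shows "ord h = p"
proof -
  have hG: "h \<in> carrier G" using h subgroup.subset[OF H(1)] by blast
  have "subgroup (generate G {h}) G" using hG by (intro generate_is_subgroup) simp
  moreover have "generate G {h} \<subseteq> H" using H(1) h by (intro generate_subgroup_incl) auto
  moreover have "h \<in> generate G {h}" by (rule generate.incl) simp
  ultimately have "generate G {h} = H"
    using subgroup_of_prime_order_cases[OF _ H(1) _ H(2)] h by blast
  then show ?thesis using generate_pow_card[OF hG] H(2) by simp
qed

definition twist :: "nat \<Rightarrow> 'a \<Rightarrow> 'a" where
  "twist n z = (f ^^ n) z \<otimes> inv z"

lemma group_hom_twist: "group_hom G G (twist n)"
proof -
  interpret fn: group_hom G G "f ^^ n" by (rule group_hom_funpow)
  have "twist n \<in> hom G G" by (rule homI) (simp_all add: twist_def inv_mult m_ac)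
  then show ?thesis by unfold_locales
qed

lemma twist_eq_one_iff:
  assumes "z \<in> carrier G" shows "twist n z = \<one> \<longleftrightarrow> z \<in> Fix n"
proof -
  have "(f ^^ n) z \<in> carrier G" using assms by (rule funpow_mem)
  then have "twist n z = \<one> \<longleftrightarrow> (f ^^ n) z \<otimes> inv z = z \<otimes> inv z"
    using assms by (simp add: twist_def)
  also have "\<dots> \<longleftrightarrow> (f ^^ n) z = z"
    by (rule right_cancel) (use assms \<open>(f ^^ n) z \<in> carrier G\<close> in simp_all)
  finally show ?thesis using assms by (simp add: Fix_def)
qed

lemma twist_commute:
  assumes "z \<in> carrier G" shows "f (twist n z) = twist n (f z)"
proof -
  interpret f1: group_hom G G f using group_hom_funpow[of 1] by simp
  interpret fn: group_hom G G "f ^^ n" by (rule group_hom_funpow)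
  show ?thesis using assms by (simp add: twist_def funpow_swap1)
qed

lemma funpow_mult_eq_twist_pow:
  assumes y: "y \<in> carrier G" and fix_twist: "twist d y \<in> Fix d"
  shows "(f ^^ (d * n)) y = twist d y [^] n \<otimes> y"
proof (induction n)
  case 0
  show ?case using y by simp
next
  case (Suc n)
  interpret fd: group_hom G G "f ^^ d" by (rule group_hom_funpow)
  let ?h = "twist d y"
  have h: "?h \<in> carrier G" "(f ^^ d) ?h = ?h" using fix_twist by (auto simp: Fix_def)
  have "(f ^^ d) y = ?h \<otimes> y" using y by (simp add: twist_def m_assoc)
  then have "(f ^^ (d * Suc n)) y = ?h [^] n \<otimes> (?h \<otimes> y)"
    using Suc h y by (simp add: funpow_add fd.hom_nat_pow)
  also have "\<dots> = ?h [^] Suc n \<otimes> y" using h y by (simp add: m_assoc)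
  finally show ?case .
qed

text \<open>The image of \<open>twist d\<close> is an invariant subgroup, neither trivial nor all of \<open>G\<close>
  (its kernel is \<open>Fix d\<close>), hence it is the unique invariant line.\<close>
lemma twist_mem_unique_line:
  assumes line: "invariant_line (Fix d)" and unique: "\<And>H. invariant_line H \<Longrightarrow> H = Fix d"
    and y: "y \<in> carrier G - Fix d"
  shows "twist d y \<in> Fix d - {\<one>}"
proof -
  interpret tw: group_hom G G "twist d" by (rule group_hom_twist)
  let ?J = "twist d ` carrier G"
  have "f ` ?J \<subseteq> ?J" using twist_commute funpow_mem[of _ 1] by force
  moreover have "twist d y \<in> ?J - {\<one>}" using y twist_eq_one_iff by auto
  moreover have "?J \<noteq> carrier G"
  proof
    assume "?J = carrier G"
    then have inj: "inj_on (twist d) (carrier G)" using finite_G by (simp add: eq_card_imp_inj_on)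
    obtain h where h: "h \<in> Fix d - {\<one>}" using invariant_line_nonunit[OF line] .
    then have "h \<in> carrier G" "twist d h = twist d \<one>"
      using twist_eq_one_iff subgroup.one_closed[OF subgroup_Fix] by (auto simp: Fix_def)
    then show False using inj_onD[OF inj] h by blast
  qed
  ultimately have "invariant_line ?J"
    using invariant_subgroup_cases[OF tw.img_is_subgroup] by blast
  then show ?thesis using unique \<open>twist d y \<in> ?J - {\<one>}\<close> by simp
qed

lemma cycle_len_off_unique_line:
  assumes x: "x \<in> carrier G" and line: "invariant_line (Fix (cycle_len f x))"
    and unique: "\<And>H. invariant_line H \<Longrightarrow> H = Fix (cycle_len f x)"
    and y: "y \<in> carrier G - Fix (cycle_len f x)"
  shows "cycle_len f y = p * cycle_len f x"
proof -
  define d where "d = cycle_len f x"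
  have h: "twist d y \<in> Fix d - {\<one>}"
    using twist_mem_unique_line[of d y] line unique y unfolding d_def by blast
  then have "ord (twist d y) = p"
    using ord_eq_on_line line unfolding d_def invariant_line_def by blast
  then have pow: "(f ^^ (d * n)) y = y \<longleftrightarrow> p dvd n" for n
    using funpow_mult_eq_twist_pow[of y d n] pow_eq_id[of "twist d y" n] h y
    by (simp add: r_cancel_one Fix_def)
  have dvd: "d dvd k" if "(f ^^ k) y = y" for k
  proof -
    have "y \<in> Fix k" using that y by (simp add: Fix_def)
    moreover have "y \<noteq> \<one>" "y \<notin> Fix d"
      using y subgroup.one_closed[OF subgroup_Fix] unfolding d_def by auto
    ultimately have "Fix k = carrier G"
      using invariant_subgroup_cases[OF subgroup_Fix Fix_invariant] unique unfolding d_def by blast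
    then show ?thesis using x mem_Fix_iff[OF x] unfolding d_def by blast
  qed
  have "(f ^^ k) y = y \<longleftrightarrow> p * d dvd k" for k
  proof
    assume "(f ^^ k) y = y"
    moreover obtain n where "k = d * n" using dvd[OF \<open>(f ^^ k) y = y\<close>] by blast
    ultimately show "p * d dvd k" using pow by auto
  next
    assume "p * d dvd k"
    then obtain m where "k = p * d * m" by (rule dvdE)
    then have "k = d * (p * m)" by (simp add: ac_simps)
    then show "(f ^^ k) y = y" using pow by simp
  qed
  then show ?thesis using cycle_len_eqI y unfolding d_def by blast
qed

lemma cycle_type_if_no_line:
  assumes no_line: "\<And>x. x \<in> carrier G - {\<one>} \<Longrightarrow> \<not> invariant_line (Fix (cycle_len f x))"
  shows "\<exists>d. d > 0 \<and> d dvd p ^ 2 - 1 \<and>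
    cycle_type f (carrier G) = replicate_mset ((p ^ 2 - 1) div d) d + {#1#}"
proof -
  have full: "Fix (cycle_len f x) = carrier G" if x: "x \<in> carrier G - {\<one>}" for x
  proof -
    have "x \<in> Fix (cycle_len f x)" using x by (simp add: mem_Fix_iff)
    then show ?thesis
      using invariant_subgroup_cases[OF subgroup_Fix Fix_invariant, of "cycle_len f x"] no_line x
      by auto
  qed
  obtain x\<^sub>0 where x\<^sub>0: "x\<^sub>0 \<in> carrier G - {\<one>}" by (rule exists_nonunit)
  have "cycle_len f y = cycle_len f x\<^sub>0" if y: "y \<in> carrier G - {\<one>}" for y
  proof (rule dvd_antisym)
    show "cycle_len f y dvd cycle_len f x\<^sub>0"
      using full[OF x\<^sub>0] y mem_Fix_iff[of y "cycle_len f x\<^sub>0"] by auto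
    show "cycle_len f x\<^sub>0 dvd cycle_len f y"
      using full[OF y] x\<^sub>0 mem_Fix_iff[of x\<^sub>0 "cycle_len f y"] by auto
  qed
  then have "cycle_type f (carrier G)
      = replicate_mset ((p ^ 2 - 1) div cycle_len f x\<^sub>0) (cycle_len f x\<^sub>0) + {#1#}"
    "cycle_len f x\<^sub>0 dvd p ^ 2 - 1"
    using cycle_type_fixpoint_uniform[OF one_closed aut_one, of "cycle_len f x\<^sub>0"] card_G by auto
  then show ?thesis using cycle_len_pos x\<^sub>0 by blast
qed

lemma cycle_type_if_unique_line:
  assumes x: "x \<in> carrier G - {\<one>}" and line: "invariant_line (Fix (cycle_len f x))"
    and unique: "\<And>H. invariant_line H \<Longrightarrow> H = Fix (cycle_len f x)"
  shows "\<exists>d. d > 0 \<and> d dvd p - 1 \<and>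
    cycle_type f (carrier G) = replicate_mset ((p - 1) div d) (p * d)
                             + replicate_mset ((p - 1) div d) d + {#1#}"
proof -
  have "x \<in> Fix (cycle_len f x) - {\<one>}" using x mem_Fix_iff by simp
  then show ?thesis
    using cycle_type_one_line[OF line _ refl] cycle_len_off_unique_line[OF _ line unique]
      cycle_type_line(2)[OF line] cycle_len_pos x by blast
qed

lemma cycle_type_if_two_lines:
  assumes "invariant_line H\<^sub>1" "invariant_line H\<^sub>2" "H\<^sub>1 \<noteq> H\<^sub>2"
  shows "\<exists>d\<^sub>1 d\<^sub>2. d\<^sub>1 > 0 \<and> d\<^sub>2 > 0 \<and> d\<^sub>1 dvd p - 1 \<and> d\<^sub>2 dvd p - 1 \<and>
    cycle_type f (carrier G) = replicate_mset ((p - 1) ^ 2 div lcm d\<^sub>1 d\<^sub>2) (lcm d\<^sub>1 d\<^sub>2)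
                             + replicate_mset ((p - 1) div d\<^sub>1) d\<^sub>1
                             + replicate_mset ((p - 1) div d\<^sub>2) d\<^sub>2 + {#1#}"
proof -
  obtain x\<^sub>1 x\<^sub>2 where x: "x\<^sub>1 \<in> H\<^sub>1 - {\<one>}" "x\<^sub>2 \<in> H\<^sub>2 - {\<one>}"
    using invariant_line_nonunit assms(1,2) by metis
  then have "x\<^sub>1 \<in> carrier G" "x\<^sub>2 \<in> carrier G"
    using assms(1,2) subgroup.subset by (auto simp: invariant_line_def)
  then show ?thesis
    using cycle_type_two_lines[OF assms x(1) refl x(2) refl] cycle_len_pos
      cycle_type_line(2)[OF assms(1) x(1)] cycle_type_line(2)[OF assms(2) x(2)] by blast
qed

theorem cycle_type_cases:
  "(\<exists>d. d > 0 \<and> d dvd p ^ 2 - 1 \<and>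
      cycle_type f (carrier G) = replicate_mset ((p ^ 2 - 1) div d) d + {#1#}) \<or>
   (\<exists>d. d > 0 \<and> d dvd p - 1 \<and>
      cycle_type f (carrier G) = replicate_mset ((p - 1) div d) (p * d)
                               + replicate_mset ((p - 1) div d) d + {#1#}) \<or>
   (\<exists>d\<^sub>1 d\<^sub>2. d\<^sub>1 > 0 \<and> d\<^sub>2 > 0 \<and> d\<^sub>1 dvd p - 1 \<and> d\<^sub>2 dvd p - 1 \<and>
      cycle_type f (carrier G) = replicate_mset ((p - 1) ^ 2 div lcm d\<^sub>1 d\<^sub>2) (lcm d\<^sub>1 d\<^sub>2)
                               + replicate_mset ((p - 1) div d\<^sub>1) d\<^sub>1
                               + replicate_mset ((p - 1) div d\<^sub>2) d\<^sub>2 + {#1#})"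
proof (cases "\<exists>x \<in> carrier G - {\<one>}. invariant_line (Fix (cycle_len f x))")
  case False
  then show ?thesis using cycle_type_if_no_line by blast
next
  case True
  then obtain x where x: "x \<in> carrier G - {\<one>}" "invariant_line (Fix (cycle_len f x))" by blast
  show ?thesis
  proof (cases "\<exists>H. invariant_line H \<and> H \<noteq> Fix (cycle_len f x)")
    case True
    then show ?thesis using cycle_type_if_two_lines x(2) by blast
  next
    case False
    then show ?thesis using cycle_type_if_unique_line[OF x] by blast
  qed
qed

end

section \<open>Triangular automorphisms of \<open>\<int>\<^sub>p \<times> \<int>\<^sub>p\<close>\<close>

lemma iso_if_inj_endo:
  assumes "finite (carrier G)" "h \<in> hom G G" "inj_on h (carrier G)"
  shows "h \<in> iso G G"
  using assms endo_inj_surj[OF assms(1) _ assms(3)]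
  by (simp add: iso_iff hom_in_carrier image_subsetI)

definition Zp_sq :: "nat \<Rightarrow> (nat \<times> nat) monoid" where
  "Zp_sq p = \<lparr>carrier = {..<p} \<times> {..<p},
     monoid.mult = (\<lambda>u v. ((fst u + fst v) mod p, (snd u + snd v) mod p)), one = (0, 0)\<rparr>"

lemma finite_carrier_Zp_sq: "finite (carrier (Zp_sq p))"
  by (simp add: Zp_sq_def)

lemma card_Zp_sq: "card (carrier (Zp_sq p)) = p ^ 2"
  by (simp add: Zp_sq_def card_cartesian_product power2_eq_square)

lemma comm_group_Zp_sq:
  assumes "0 < p" shows "comm_group (Zp_sq p)"
proof (rule comm_groupI)
  fix x y z assume "x \<in> carrier (Zp_sq p)" "y \<in> carrier (Zp_sq p)" "z \<in> carrier (Zp_sq p)"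
  show "x \<otimes>\<^bsub>Zp_sq p\<^esub> y \<otimes>\<^bsub>Zp_sq p\<^esub> z = x \<otimes>\<^bsub>Zp_sq p\<^esub> (y \<otimes>\<^bsub>Zp_sq p\<^esub> z)"
    by (simp add: Zp_sq_def mod_simps add_ac)
  show "x \<otimes>\<^bsub>Zp_sq p\<^esub> y = y \<otimes>\<^bsub>Zp_sq p\<^esub> x" by (simp add: Zp_sq_def add_ac)
next
  fix x assume x: "x \<in> carrier (Zp_sq p)"
  show "\<exists>y\<in>carrier (Zp_sq p). y \<otimes>\<^bsub>Zp_sq p\<^esub> x = \<one>\<^bsub>Zp_sq p\<^esub>"
    using x assms
    by (intro bexI[of _ "((p - fst x) mod p, (p - snd x) mod p)"]) (auto simp: Zp_sq_def mod_simps)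
qed (use assms in \<open>auto simp: Zp_sq_def\<close>)

lemma mod_lin_comb: "(k * (u mod p) + l * (v mod p)) mod p = (k * u + l * v) mod (p::nat)"
proof -
  have "(k * (u mod p) + l * (v mod p)) mod p
      = ((k * (u mod p)) mod p + (l * (v mod p)) mod p) mod p"
    by (simp only: mod_add_eq)
  also have "\<dots> = ((k * u) mod p + (l * v) mod p) mod p" by (simp only: mod_mult_right_eq)
  finally show ?thesis by (simp only: mod_add_eq)
qed

definition lin_map :: "nat \<Rightarrow> nat \<Rightarrow> nat \<Rightarrow> nat \<Rightarrow> nat \<Rightarrow> nat \<times> nat \<Rightarrow> nat \<times> nat" where
  "lin_map p a b c d z = ((a * fst z + b * snd z) mod p, (c * fst z + d * snd z) mod p)"

lemma hom_lin_map:
  assumes "0 < p" shows "lin_map p a b c d \<in> hom (Zp_sq p) (Zp_sq p)"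
proof (rule homI)
  fix x y :: "nat \<times> nat"
  have "(k * ((u + u') mod p) + l * ((v + v') mod p)) mod p
      = ((k * u + l * v) mod p + (k * u' + l * v') mod p) mod p" for k l u u' v v' :: nat
    unfolding mod_lin_comb mod_add_eq by (simp add: algebra_simps)
  then show "lin_map p a b c d (x \<otimes>\<^bsub>Zp_sq p\<^esub> y) = lin_map p a b c d x \<otimes>\<^bsub>Zp_sq p\<^esub> lin_map p a b c d y"
    by (simp add: Zp_sq_def lin_map_def)
qed (use assms in \<open>simp add: Zp_sq_def lin_map_def\<close>)

lemma subgroup_image_lin_map:
  assumes "0 < p" shows "subgroup (lin_map p a b c d ` carrier (Zp_sq p)) (Zp_sq p)"
proof -
  interpret group "Zp_sq p" using comm_group_Zp_sq[OF assms] by (simp add: comm_group_def)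
  show ?thesis using hom_lin_map[OF assms] by (intro group_hom.img_is_subgroup) (unfold_locales)
qed

lemma subgroup_axes:
  assumes "0 < p"
  shows "subgroup ({..<p} \<times> {0}) (Zp_sq p)" and "subgroup ({0} \<times> {..<p}) (Zp_sq p)"
proof -
  have "lin_map p 1 0 0 0 ` carrier (Zp_sq p) = {..<p} \<times> {0}"
    "lin_map p 0 0 0 1 ` carrier (Zp_sq p) = {0} \<times> {..<p}"
  proof -
    have "(x, 0) = lin_map p 1 0 0 0 (x, 0)" "(0, x) = lin_map p 0 0 0 1 (0, x)" if "x < p" for x
      using that by (simp_all add: lin_map_def)
    then show "lin_map p 1 0 0 0 ` carrier (Zp_sq p) = {..<p} \<times> {0}"
      "lin_map p 0 0 0 1 ` carrier (Zp_sq p) = {0} \<times> {..<p}"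
      using assms by (auto simp: Zp_sq_def lin_map_def image_iff)
  qed
  then show "subgroup ({..<p} \<times> {0}) (Zp_sq p)" "subgroup ({0} \<times> {..<p}) (Zp_sq p)"
    using subgroup_image_lin_map[OF assms] by metis+
qed

lemma exists_residue_of_order:
  assumes "Factorial_Ring.prime p" "d dvd p - 1" "0 < d"
  obtains a where "ord p a = d" "coprime a p"
proof -
  have "card {a \<in> totatives p. ord p a = d} = totient d"
    using prime_card_elements_with_ord_eq_totient[OF _ assms(1)] prime_gt_1_nat[OF assms(1)]
      assms(2) by simp
  then have "card {a \<in> totatives p. ord p a = d} > 0" using assms(3) by simp
  then obtain a where "ord p a = d" by (auto simp: card_gt_0_iff)
  moreover have "coprime a p"
    using calculation assms(3) ord_eq_0[of p a] by (simp add: coprime_commute)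
  ultimately show ?thesis by (rule that)
qed

lemma power_mult_mod_eq_self_iff:
  fixes p a x :: nat
  assumes "Factorial_Ring.prime p" "x < p"
  shows "(a ^ n * x) mod p = x \<longleftrightarrow> x = 0 \<or> ord p a dvd n"
proof (cases "x = 0")
  case False
  then have "coprime x p"
    using assms by (metis coprime_commute nat_dvd_not_less neq0_conv prime_imp_coprime)
  then have "[a ^ n * x = 1 * x] (mod p) \<longleftrightarrow> [a ^ n = 1] (mod p)"
    by (rule cong_mult_rcancel_nat)
  then show ?thesis using False assms(2) ord_divides[of a n p] by (simp add: cong_def)
qed simp

lemma mult_mod_inj:
  fixes p a x y :: nat
  assumes "coprime a p" "x < p" "y < p" "(a * x) mod p = (a * y) mod p"
  shows "x = y"
  using cong_mult_lcancel_nat[OF assms(1)] assms(2-4) by (simp add: cong_def)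

lemma funpow_lin_map_first_axis:
  assumes "x < p" shows "(lin_map p a b 0 d ^^ n) (x, 0) = ((a ^ n * x) mod p, 0)"
proof (induction n)
  case (Suc n)
  then show ?case by (simp add: lin_map_def mod_mult_right_eq mult.assoc)
qed (use assms in simp)

lemma funpow_lin_map_second_axis:
  assumes "y < p" shows "(lin_map p a 0 0 d ^^ n) (0, y) = (0, (d ^ n * y) mod p)"
proof (induction n)
  case (Suc n)
  then show ?case by (simp add: lin_map_def mod_mult_right_eq mult.assoc)
qed (use assms in simp)

lemma funpow_lin_map_jordan:
  assumes "x < p" "y < p"
  shows "(lin_map p a 1 0 a ^^ n) (x, y)
    = ((a ^ n * x + n * a ^ (n - 1) * y) mod p, (a ^ n * y) mod p)"
proof (induction n)
  case (Suc n)
  have "a * (a ^ n * x + n * a ^ (n - 1) * y) + a ^ n * y = a ^ Suc n * x + Suc n * a ^ n * y"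
    by (cases n) (simp_all add: algebra_simps)
  then show ?case
    using Suc mod_lin_comb[of a _ p 1] by (simp add: lin_map_def mod_mult_right_eq mult.assoc)
qed (use assms in simp)

lemma aut_p2_lin_map:
  assumes p: "Factorial_Ring.prime p" and cop: "coprime a p" "coprime d p"
  shows "aut_p2 (Zp_sq p) (lin_map p a b 0 d) p"
proof -
  have p0: "0 < p" using prime_gt_0_nat[OF p] .
  have "inj_on (lin_map p a b 0 d) (carrier (Zp_sq p))"
  proof (rule inj_onI)
    fix u v assume uv: "u \<in> carrier (Zp_sq p)" "v \<in> carrier (Zp_sq p)"
      "lin_map p a b 0 d u = lin_map p a b 0 d v"
    then have snd: "snd u = snd v"
      using mult_mod_inj[OF cop(2), of "snd u" "snd v"]
      by (simp add: lin_map_def Zp_sq_def mem_Times_iff)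
    then have "[a * fst u + b * snd u = a * fst v + b * snd u] (mod p)"
      using uv(3) by (simp add: lin_map_def cong_def)
    then have "(a * fst u) mod p = (a * fst v) mod p"
      unfolding cong_add_rcancel_nat by (simp add: cong_def)
    then have "fst u = fst v"
      using mult_mod_inj[OF cop(1), of "fst u" "fst v"] uv(1,2)
      by (simp add: Zp_sq_def mem_Times_iff)
    with snd show "u = v" by (simp add: prod_eq_iff)
  qed
  then have "lin_map p a b 0 d \<in> iso (Zp_sq p) (Zp_sq p)"
    using hom_lin_map[OF p0] by (intro iso_if_inj_endo finite_carrier_Zp_sq)
  then show ?thesis
    by (intro aut_p2.intro aut_p2_axioms.intro comm_group_Zp_sq[OF p0] p card_Zp_sq)
qed

lemma first_axis_invariant_line:
  assumes p: "Factorial_Ring.prime p" and cop: "coprime a p" "coprime d p"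
  shows "aut_p2.invariant_line (Zp_sq p) (lin_map p a b 0 d) p ({..<p} \<times> {0})"
proof -
  interpret aut_p2 "Zp_sq p" "lin_map p a b 0 d" p using aut_p2_lin_map[OF assms] .
  show ?thesis
    unfolding invariant_line_def using subgroup_axes(1) prime_gt_0_nat[OF p]
    by (auto simp: lin_map_def card_cartesian_product)
qed

lemma cycle_len_first_axis:
  assumes p: "Factorial_Ring.prime p" and cop: "coprime a p" "coprime d p"
  shows "cycle_len (lin_map p a b 0 d) (1, 0) = ord p a"
proof -
  interpret aut_p2 "Zp_sq p" "lin_map p a b 0 d" p using aut_p2_lin_map[OF assms] .
  have "1 < p" using prime_gt_1_nat[OF p] .
  then show ?thesis
    using funpow_lin_map_first_axis[where x = 1 and a = a and b = b and d = d]
      power_mult_mod_eq_self_iff[OF p, of 1 a]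
    by (intro cycle_len_eqI) (simp_all add: Zp_sq_def)
qed

theorem is_abelian_automorphism_diagonal:
  assumes p: "Factorial_Ring.prime p" and f: "finite A" "bij_betw f A A"
    and d: "0 < d\<^sub>1" "0 < d\<^sub>2" "d\<^sub>1 dvd p - 1" "d\<^sub>2 dvd p - 1"
    and ct: "cycle_type f A = replicate_mset ((p - 1) ^ 2 div lcm d\<^sub>1 d\<^sub>2) (lcm d\<^sub>1 d\<^sub>2)
      + replicate_mset ((p - 1) div d\<^sub>1) d\<^sub>1 + replicate_mset ((p - 1) div d\<^sub>2) d\<^sub>2 + {#1#}"
  shows "is_abelian_automorphism f A"
proof -
  have p1: "1 < p" using prime_gt_1_nat[OF p] .
  obtain a\<^sub>1 where a\<^sub>1: "ord p a\<^sub>1 = d\<^sub>1" "coprime a\<^sub>1 p"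
    using exists_residue_of_order[OF p d(3,1)] .
  obtain a\<^sub>2 where a\<^sub>2: "ord p a\<^sub>2 = d\<^sub>2" "coprime a\<^sub>2 p"
    using exists_residue_of_order[OF p d(4,2)] .
  interpret aut_p2 "Zp_sq p" "lin_map p a\<^sub>1 0 0 a\<^sub>2" p using aut_p2_lin_map[OF p a\<^sub>1(2) a\<^sub>2(2)] .
  have line\<^sub>2: "invariant_line ({0} \<times> {..<p})"
    unfolding invariant_line_def using subgroup_axes(2) p1
    by (auto simp: lin_map_def card_cartesian_product)
  have len\<^sub>2: "cycle_len (lin_map p a\<^sub>1 0 0 a\<^sub>2) (0, 1) = d\<^sub>2"
    using funpow_lin_map_second_axis[where y = 1 and a = a\<^sub>1 and d = a\<^sub>2]
      power_mult_mod_eq_self_iff[OF p, of 1 a\<^sub>2] p1 a\<^sub>2(1)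
    by (intro cycle_len_eqI) (simp_all add: Zp_sq_def)
  have "(1, 0) \<in> {..<p} \<times> {0} - {\<one>\<^bsub>Zp_sq p\<^esub>}"
    "(0, 1) \<in> {0} \<times> {..<p} - {\<one>\<^bsub>Zp_sq p\<^esub>}" "{..<p} \<times> {0} \<noteq> {0} \<times> {..<p}"
    using p1 by (auto simp: Zp_sq_def)
  from cycle_type_two_lines[OF first_axis_invariant_line[OF p a\<^sub>1(2) a\<^sub>2(2)] line\<^sub>2 this(3,1)
      cycle_len_first_axis[OF p a\<^sub>1(2) a\<^sub>2(2)] this(2) len\<^sub>2]
  have "cycle_type (lin_map p a\<^sub>1 0 0 a\<^sub>2) (carrier (Zp_sq p)) = cycle_type f A"
    unfolding a\<^sub>1(1) ct .
  then show ?thesis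
    using is_abelian_automorphism_if_cycle_type_eq[OF comm_group_Zp_sq _ aut f] p1
      finite_carrier_Zp_sq by simp
qed

lemma jordan_mod_eq_self_iff:
  fixes p a x y :: nat
  assumes p: "Factorial_Ring.prime p" and a: "ord p a = d" "0 < d" "d dvd p - 1"
    and xy: "x < p" "0 < y" "y < p"
  shows "(a ^ n * x + n * a ^ (n - 1) * y) mod p = x \<and> (a ^ n * y) mod p = y
    \<longleftrightarrow> p * d dvd n"
proof -
  have "coprime p (a ^ (n - 1))" using a(1,2) ord_eq_0[of p a] by simp
  then have "\<not> p dvd a ^ (n - 1)"
    using coprime_absorb_left[of p "a ^ (n - 1)"] not_prime_unit[of p] p by auto
  moreover have "\<not> p dvd y" using xy by (auto dest: dvd_imp_le)
  ultimately have p_dvd: "p dvd n * a ^ (n - 1) * y \<longleftrightarrow> p dvd n"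
    using p by (simp add: prime_dvd_mult_iff)
  have "(a ^ n * x + n * a ^ (n - 1) * y) mod p = x \<longleftrightarrow> p dvd n" if "d dvd n"
  proof -
    have "(a ^ n * x) mod p = x" using power_mult_mod_eq_self_iff[OF p xy(1)] a(1) that by simp
    then have "(a ^ n * x + n * a ^ (n - 1) * y) mod p = (x + n * a ^ (n - 1) * y) mod p"
      by (metis mod_add_left_eq)
    also have "\<dots> = x \<longleftrightarrow> [x + n * a ^ (n - 1) * y = x + 0] (mod p)"
      using xy(1) by (simp add: cong_def)
    also have "\<dots> \<longleftrightarrow> p dvd n * a ^ (n - 1) * y"
      by (simp only: cong_add_lcancel_nat cong_0_iff)
    finally show ?thesis using p_dvd by simp
  qed
  moreover have "(a ^ n * y) mod p = y \<longleftrightarrow> d dvd n"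
    using power_mult_mod_eq_self_iff[OF p xy(3)] xy(2) a(1) by simp
  moreover have "p * d dvd n \<longleftrightarrow> p dvd n \<and> d dvd n"
  proof -
    have "d \<le> p - 1" using dvd_imp_le[OF a(3)] prime_gt_1_nat[OF p] by simp
    then have "\<not> p dvd d" using a(2) prime_gt_1_nat[OF p] by (auto dest: dvd_imp_le)
    then have "coprime p d" using prime_imp_coprime[OF p] by blast
    then show ?thesis
      using divides_mult[of p n d] dvd_mult_left[of p d n] dvd_mult_right[of p d n] by blast
  qed
  ultimately show ?thesis by blast
qed

theorem is_abelian_automorphism_jordan:
  assumes p: "Factorial_Ring.prime p" and f: "finite A" "bij_betw f A A"
    and d: "0 < d" "d dvd p - 1"
    and ct: "cycle_type f A
      = replicate_mset ((p - 1) div d) (p * d) + replicate_mset ((p - 1) div d) d + {#1#}"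
  shows "is_abelian_automorphism f A"
proof -
  have p1: "1 < p" using prime_gt_1_nat[OF p] .
  obtain a where a: "ord p a = d" "coprime a p" using exists_residue_of_order[OF p d(2,1)] .
  interpret aut_p2 "Zp_sq p" "lin_map p a 1 0 a" p using aut_p2_lin_map[OF p a(2) a(2)] .
  have "cycle_len (lin_map p a 1 0 a) z = p * d"
    if z: "z \<in> carrier (Zp_sq p) - {..<p} \<times> {0}" for z
  proof -
    obtain x y where xy: "z = (x, y)" "x < p" "0 < y" "y < p"
      using z by (cases z) (auto simp: Zp_sq_def)
    show ?thesis
      using funpow_lin_map_jordan[OF xy(2,4)] jordan_mod_eq_self_iff[OF p a(1) d xy(2-4)] z
      unfolding xy(1) by (intro cycle_len_eqI) auto
  qed
  moreover have "(1, 0) \<in> {..<p} \<times> {0} - {\<one>\<^bsub>Zp_sq p\<^esub>}" using p1 by (auto simp: Zp_sq_def)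
  ultimately have "cycle_type (lin_map p a 1 0 a) (carrier (Zp_sq p)) = cycle_type f A"
    using cycle_type_one_line[OF first_axis_invariant_line[OF p a(2) a(2)] _
        cycle_len_first_axis[OF p a(2) a(2)]]
    unfolding a(1) ct by blast
  then show ?thesis
    using is_abelian_automorphism_if_cycle_type_eq[OF comm_group_Zp_sq _ aut f] p1
      finite_carrier_Zp_sq by simp
qed

section \<open>Scalings of a finite field\<close>

lemma (in field) exists_mult_order:
  assumes fin: "finite (carrier R)" and d: "d dvd card (carrier R) - 1"
  obtains u where "u \<in> carrier R" "u \<noteq> \<zero>" "\<And>n. u [^] n = \<one> \<longleftrightarrow> d dvd n"
proof -
  interpret M: group "Multiplicative_Group.mult_of R" by (rule field_mult_group)
  define N where "N = card (carrier R) - 1"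
  obtain a where a: "a \<in> carrier (Multiplicative_Group.mult_of R)"
    "carrier (Multiplicative_Group.mult_of R) = {a [^] i | i::nat. i \<in> UNIV}"
    using finite_field_mult_group_has_gen[OF fin] by blast
  have card_M: "card (carrier (Multiplicative_Group.mult_of R)) = N"
    using fin unfolding N_def by (simp add: carrier_mult_of card_Diff_singleton)
  have pow: "x [^]\<^bsub>Multiplicative_Group.mult_of R\<^esub> (k::nat) = x [^] k" for x k
    by (induction k) simp_all
  have "M.ord a = N"
    using M.generate_pow_card[OF a(1)] a(2) card_M
      M.generate_pow_on_finite_carrier[OF finite_mult_of[OF fin] a(1)] by (simp add: pow)
  moreover have "0 < N"
    using card_mono[OF fin, of "{\<zero>, \<one>}"] zero_not_one unfolding N_def by simp
  moreover obtain k where k: "N = d * k" using d unfolding N_def by blast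
  ultimately have ord: "M.ord (a [^]\<^bsub>Multiplicative_Group.mult_of R\<^esub> k) = d"
    using M.ord_pow_gen[OF a(1), of k] by auto
  let ?u = "a [^]\<^bsub>Multiplicative_Group.mult_of R\<^esub> k"
  have "?u \<in> carrier (Multiplicative_Group.mult_of R)" using a(1) by (rule M.nat_pow_closed)
  moreover have "?u [^] n = \<one> \<longleftrightarrow> d dvd n" for n
    using M.pow_eq_id[OF \<open>?u \<in> carrier (Multiplicative_Group.mult_of R)\<close>, of n] ord
    by (simp add: pow)
  ultimately show ?thesis by (intro that[of ?u]) (simp_all add: carrier_mult_of)
qed

theorem cycle_type_field_scaling:
  assumes E: "field E" "finite (carrier E)" and d: "d dvd card (carrier E) - 1"
  shows "\<exists>\<sigma>. \<sigma> \<in> iso (add_monoid E) (add_monoid E) \<and>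
    cycle_type \<sigma> (carrier E) = replicate_mset ((card (carrier E) - 1) div d) d + {#1#}"
proof -
  interpret field E by (fact E(1))
  obtain u where u: "u \<in> carrier E" "u \<noteq> \<zero>\<^bsub>E\<^esub>"
    "\<And>n. u [^]\<^bsub>E\<^esub> n = \<one>\<^bsub>E\<^esub> \<longleftrightarrow> d dvd n"
    using exists_mult_order[OF E(2) d] by blast
  define \<sigma> where "\<sigma> x = u \<otimes>\<^bsub>E\<^esub> x" for x
  have "\<sigma> \<in> hom (add_monoid E) (add_monoid E)"
    using u(1) by (intro homI) (simp_all add: \<sigma>_def r_distr)
  moreover have "inj_on \<sigma> (carrier E)"
    using u(1,2) m_lcancel unfolding \<sigma>_def inj_on_def by blast
  ultimately have \<sigma>: "\<sigma> \<in> iso (add_monoid E) (add_monoid E)"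
    using E(2) by (intro iso_if_inj_endo) simp_all
  interpret perm_on \<sigma> "carrier E" using E(2) \<sigma> by unfold_locales (simp_all add: Group.iso_def)
  have iter: "(\<sigma> ^^ n) x = u [^]\<^bsub>E\<^esub> n \<otimes>\<^bsub>E\<^esub> x" if "x \<in> carrier E" for n x
    using that u(1) by (induction n) (simp_all add: \<sigma>_def m_assoc m_lcomm)
  have "cycle_len \<sigma> x = d" if "x \<in> carrier E - {\<zero>\<^bsub>E\<^esub>}" for x
  proof (rule cycle_len_eqI)
    show "x \<in> carrier E" using that by blast
    show "(\<sigma> ^^ n) x = x \<longleftrightarrow> d dvd n" for n
      using iter[of x n] m_rcancel[of x "u [^]\<^bsub>E\<^esub> n" "\<one>\<^bsub>E\<^esub>"] u(1,3) that by simp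
  qed
  then have "cycle_type \<sigma> (carrier E) = replicate_mset ((card (carrier E) - 1) div d) d + {#1#}"
    using cycle_type_fixpoint_uniform[of "\<zero>\<^bsub>E\<^esub>" d] u(1) by (simp add: \<sigma>_def)
  with \<sigma> show ?thesis by blast
qed

text \<open>A pair \<open>(a, b)\<close> stands for \<open>a + b\<theta>\<close> with \<open>\<theta>\<^sup>2 = \<theta> + s\<close>. The result is a field as soon as
  \<open>X\<^sup>2 - X - s\<close> has no root; unlike \<open>X\<^sup>2 - s\<close>, such a polynomial exists also in characteristic 2.\<close>
definition quad_ext :: "('a, 'b) ring_scheme \<Rightarrow> 'a \<Rightarrow> ('a \<times> 'a) ring" where
  "quad_ext F s = \<lparr>carrier = carrier F \<times> carrier F,
     monoid.mult = (\<lambda>(a, b) (c, d). (a \<otimes>\<^bsub>F\<^esub> c \<oplus>\<^bsub>F\<^esub> s \<otimes>\<^bsub>F\<^esub> (b \<otimes>\<^bsub>F\<^esub> d),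
                                    a \<otimes>\<^bsub>F\<^esub> d \<oplus>\<^bsub>F\<^esub> b \<otimes>\<^bsub>F\<^esub> c \<oplus>\<^bsub>F\<^esub> b \<otimes>\<^bsub>F\<^esub> d)),
     one = (\<one>\<^bsub>F\<^esub>, \<zero>\<^bsub>F\<^esub>),
     ring.zero = (\<zero>\<^bsub>F\<^esub>, \<zero>\<^bsub>F\<^esub>),
     ring.add = (\<lambda>(a, b) (c, d). (a \<oplus>\<^bsub>F\<^esub> c, b \<oplus>\<^bsub>F\<^esub> d))\<rparr>"

context cring
begin

lemma cring_quad_ext:
  assumes s: "s \<in> carrier R" shows "cring (quad_ext R s)"
proof (rule cringI)
  show "abelian_group (quad_ext R s)"
  proof (rule abelian_groupI)
    fix x assume "x \<in> carrier (quad_ext R s)"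
    then show "\<exists>y\<in>carrier (quad_ext R s). y \<oplus>\<^bsub>quad_ext R s\<^esub> x = \<zero>\<^bsub>quad_ext R s\<^esub>"
      by (intro bexI[of _ "(\<ominus> fst x, \<ominus> snd x)"]) (auto simp: quad_ext_def l_neg)
  qed (auto simp: quad_ext_def a_ac)
  show "comm_monoid (quad_ext R s)"
    by (rule comm_monoidI) (auto simp: quad_ext_def s r_distr l_distr m_ac a_ac)
qed (auto simp: quad_ext_def s r_distr l_distr m_ac a_ac)

end

context field
begin

lemma quad_norm_nonzero:
  assumes s: "s \<in> carrier R" and no_root: "\<And>x. x \<in> carrier R \<Longrightarrow> x \<otimes> x \<ominus> x \<noteq> s"
    and ab: "a \<in> carrier R" "b \<in> carrier R" "(a, b) \<noteq> (\<zero>, \<zero>)"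
  shows "a \<otimes> a \<oplus> a \<otimes> b \<ominus> s \<otimes> (b \<otimes> b) \<noteq> \<zero>"
proof (cases "b = \<zero>")
  case True
  then show ?thesis using ab s integral_iff by simp
next
  case False
  then have b: "b \<in> Units R" using ab(2) field_Units by blast
  define x where "x = \<ominus> (a \<otimes> inv b)"
  have x: "x \<in> carrier R" "x \<otimes> b = \<ominus> a"
    using ab b unfolding x_def by (simp_all add: l_minus m_assoc)
  have "(b \<otimes> b) \<otimes> (x \<otimes> x \<ominus> x \<ominus> s)
      = (x \<otimes> b) \<otimes> (x \<otimes> b) \<ominus> (x \<otimes> b) \<otimes> b \<ominus> s \<otimes> (b \<otimes> b)"
    using ab x(1) s by algebra
  also have "\<dots> = a \<otimes> a \<oplus> a \<otimes> b \<ominus> s \<otimes> (b \<otimes> b)"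
    unfolding x(2) using ab s by algebra
  moreover have "x \<otimes> x \<ominus> x \<ominus> s \<noteq> \<zero>" using no_root[OF x(1)] x(1) s r_right_minus_eq by simp
  moreover have "b \<otimes> b \<noteq> \<zero>" using False ab(2) integral_iff by simp
  ultimately show ?thesis
    using integral_iff[of "b \<otimes> b" "x \<otimes> x \<ominus> x \<ominus> s"] ab(2) x(1) s by auto
qed

lemma field_quad_ext:
  assumes s: "s \<in> carrier R" and no_root: "\<And>x. x \<in> carrier R \<Longrightarrow> x \<otimes> x \<ominus> x \<noteq> s"
  shows "field (quad_ext R s)"
proof -
  interpret Q: cring "quad_ext R s" by (rule cring_quad_ext[OF s])
  show ?thesis
  proof (rule Q.cring_fieldI2)
    show "\<zero>\<^bsub>quad_ext R s\<^esub> \<noteq> \<one>\<^bsub>quad_ext R s\<^esub>" by (simp add: quad_ext_def)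
  next
    fix z assume "z \<in> carrier (quad_ext R s)" "z \<noteq> \<zero>\<^bsub>quad_ext R s\<^esub>"
    then obtain a b where z: "z = (a, b)"
      and ab: "a \<in> carrier R" "b \<in> carrier R" "(a, b) \<noteq> (\<zero>, \<zero>)"
      by (auto simp: quad_ext_def)
    define N where "N = a \<otimes> a \<oplus> a \<otimes> b \<ominus> s \<otimes> (b \<otimes> b)"
    have "N \<in> Units R"
      using quad_norm_nonzero[OF s no_root ab] ab s field_Units unfolding N_def by simp
    then have k: "inv N \<in> carrier R" "inv N \<otimes> N = \<one>" by simp_all
    have "(a, b) \<otimes>\<^bsub>quad_ext R s\<^esub> (inv N \<otimes> (a \<oplus> b), inv N \<otimes> (\<ominus> b)) = \<one>\<^bsub>quad_ext R s\<^esub>"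
    proof -
      have "a \<otimes> (inv N \<otimes> (a \<oplus> b)) \<oplus> s \<otimes> (b \<otimes> (inv N \<otimes> (\<ominus> b))) = \<one>"
        "a \<otimes> (inv N \<otimes> (\<ominus> b)) \<oplus> b \<otimes> (inv N \<otimes> (a \<oplus> b)) \<oplus> b \<otimes> (inv N \<otimes> (\<ominus> b)) = \<zero>"
        using k ab s unfolding N_def by algebra+
      then show ?thesis by (simp add: quad_ext_def)
    qed
    then show "\<exists>y\<in>carrier (quad_ext R s). z \<otimes>\<^bsub>quad_ext R s\<^esub> y = \<one>\<^bsub>quad_ext R s\<^esub>"
      using k ab z
      by (intro bexI[of _ "(inv N \<otimes> (a \<oplus> b), inv N \<otimes> (\<ominus> b))"]) (simp_all add: quad_ext_def)
  qed
qed

lemma exists_not_square_minus_self: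
  assumes "finite (carrier R)"
  obtains s where "s \<in> carrier R" "\<And>x. x \<in> carrier R \<Longrightarrow> x \<otimes> x \<ominus> x \<noteq> s"
proof -
  let ?\<psi> = "\<lambda>x. x \<otimes> x \<ominus> x"
  have "?\<psi> \<zero> = ?\<psi> \<one>" by algebra
  then have "\<not> inj_on ?\<psi> (carrier R)" unfolding inj_on_def using zero_not_one by blast
  then have "?\<psi> ` carrier R \<noteq> carrier R" using eq_card_imp_inj_on[OF assms] by metis
  moreover have "?\<psi> ` carrier R \<subseteq> carrier R" by auto
  ultimately show ?thesis using that by blast
qed

lemma exists_field_card_square:
  assumes fin: "finite (carrier R)"
  obtains E :: "('a \<times> 'a) ring"
  where "field E" "finite (carrier E)" "card (carrier E) = card (carrier R) ^ 2"
proof -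
  obtain s where "s \<in> carrier R" "\<And>x. x \<in> carrier R \<Longrightarrow> x \<otimes> x \<ominus> x \<noteq> s"
    using exists_not_square_minus_self[OF fin] by blast
  then have "field (quad_ext R s)" by (rule field_quad_ext)
  moreover have "carrier (quad_ext R s) = carrier R \<times> carrier R" by (simp add: quad_ext_def)
  ultimately show ?thesis
    using that fin by (simp add: card_cartesian_product power2_eq_square)
qed

end

lemma exists_field_card_prime_square:
  assumes "Factorial_Ring.prime p"
  obtains E :: "(int \<times> int) ring" where "field E" "finite (carrier E)" "card (carrier E) = p ^ 2"
proof -
  interpret residues_prime p "residue_ring (int p)" using assms by unfold_locales simp
  have "carrier (residue_ring (int p)) = {0..int p - 1}" by (simp add: residue_ring_def)
  then have "finite (carrier (residue_ring (int p)))" "card (carrier (residue_ring (int p))) = p"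
    by simp_all
  then show ?thesis using field.exists_field_card_square[OF is_field] that by metis
qed

theorem is_abelian_automorphism_scaling:
  assumes p: "Factorial_Ring.prime p" and f: "finite A" "bij_betw f A A"
    and d: "d dvd p ^ 2 - 1"
    and ct: "cycle_type f A = replicate_mset ((p ^ 2 - 1) div d) d + {#1#}"
  shows "is_abelian_automorphism f A"
proof -
  obtain E :: "(int \<times> int) ring" where E: "field E" "finite (carrier E)" "card (carrier E) = p ^ 2"
    using exists_field_card_prime_square[OF p] .
  interpret E: field E by (fact E(1))
  obtain \<sigma> where "\<sigma> \<in> iso (add_monoid E) (add_monoid E)" "cycle_type \<sigma> (carrier E) = cycle_type f A"
    using cycle_type_field_scaling[OF E(1,2)] E(3) d ct by metis
  then show ?thesis
    using is_abelian_automorphism_if_cycle_type_eq[OF E.a_comm_group _ _ f] E(2) by simp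
qed

theorem theorem2p7:
  fixes p :: nat and A :: "'a set" and f :: "'a \<Rightarrow> 'a"
  assumes "Factorial_Ring.prime p" and "finite A" and "card A = p ^ 2" and "bij_betw f A A"
  shows "(\<exists>G :: 'a monoid. carrier G = A \<and> comm_group G \<and> f \<in> iso G G) \<longleftrightarrow>
    ((\<forall>x\<in>A. f x = x) \<or>
     (\<exists>d. d > 0 \<and> d dvd p ^ 2 - 1 \<and>
        cycle_type f A = replicate_mset ((p ^ 2 - 1) div d) d + {#1#}) \<or>
     (\<exists>d. d > 0 \<and> d dvd p - 1 \<and>
        cycle_type f A = replicate_mset ((p - 1) div d) (p * d)
                       + replicate_mset ((p - 1) div d) d + {#1#}) \<or>
     (\<exists>d1 d2. d1 > 0 \<and> d2 > 0 \<and> d1 dvd p - 1 \<and> d2 dvd p - 1 \<and>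
        cycle_type f A = replicate_mset ((p - 1) ^ 2 div lcm d1 d2) (lcm d1 d2)
                       + replicate_mset ((p - 1) div d1) d1
                       + replicate_mset ((p - 1) div d2) d2 + {#1#}))"
    (is "?G \<longleftrightarrow> ?id \<or> ?a \<or> ?b \<or> ?c")
proof -
  have ?a if ?id
  proof -
    obtain c where "c \<in> A" using assms(3) prime_gt_0_nat[OF assms(1)] by fastforce
    then have "cycle_type f A = replicate_mset ((p ^ 2 - 1) div 1) 1 + {#1#}"
      using perm_on.cycle_type_id[of f A] assms(2-4) that by (simp add: perm_on_def)
    then show ?a by (intro exI[of _ 1]) simp
  qed
  moreover have "?a \<or> ?b \<or> ?c" if ?G
  proof -
    obtain G :: "'a monoid" where G: "carrier G = A" "comm_group G" "f \<in> iso G G"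
      using \<open>?G\<close> by blast
    interpret aut_p2 G f p using G assms(1,3) by (intro aut_p2.intro aut_p2_axioms.intro) simp_all
    show ?thesis using cycle_type_cases G(1) by blast
  qed
  moreover have "is_abelian_automorphism f A" if "?a \<or> ?b \<or> ?c"
    using that
  proof (elim disjE exE conjE)
    show "is_abelian_automorphism f A" if "d dvd p ^ 2 - 1"
      "cycle_type f A = replicate_mset ((p ^ 2 - 1) div d) d + {#1#}" for d
      using is_abelian_automorphism_scaling[OF assms(1,2,4) that] .
  qed (fact is_abelian_automorphism_jordan[OF assms(1,2,4)]
      is_abelian_automorphism_diagonal[OF assms(1,2,4)])+
  ultimately show ?thesis unfolding is_abelian_automorphism_def by blast
qed

end
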